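(* Let $\gamma>0$, let $V\in C_{p,\gamma}^{0}(\mathbb{R})$ and let $W$ be a continuous $\gamma$-periodic (possibly complex-valued) function, and set $\mathscr{L}\psi:=-\psi''+W\psi'+V\psi$ and $\bar{W}:=\frac{1}{\gamma}\int_{0}^{\gamma}W(s)\,ds$. If $\lambda\in\sigma_{g}^{1}(\mathscr{L})\cup\sigma_{g}^{2}(\mathscr{L})$, then $$\mathcal{A}(\lambda)=\{[\tfrac{1}{2\mathrm{i}}\bar{W}]_{\gamma}\}\quad\text{or}\quad\mathcal{A}(\lambda)=\{[\tfrac{1}{2\mathrm{i}}\bar{W}+\tfrac{\pi}{\gamma}]_{\gamma}\}.$$ If $\lambda\in\sigma_{g}^{3}(\mathscr{L})$, then $\mathcal{A}(\lambda)=\{[k_{1}]_{\gamma},[k_{2}]_{\gamma}\}$ with $[k_{1}+k_{2}]_{\gamma}=[\tfrac{1}{\mathrm{i}}\bar{W}]_{\gamma}$.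
   Context: $C_{p}^{0}(I)$: integrable piecewise-continuous functions on $I$ (finitely many discontinuities on each finite subinterval, one-sided improper integrals of $|f|$ converging at each discontinuity); $C_{p}^{l}(I)$: differentiable functions with derivative in $C_{p}^{l-1}(I)$; $C_{p,\gamma}^{l}(\mathbb{R})$: $\gamma$-periodic functions in $C_{p}^{l}(\mathbb{R})$; $[k]_{\gamma}=\{k+2m\pi/\gamma:m\in\mathbb{Z}\}$. Every solution in $C_p^2(\mathbb{R})$ of $\mathscr{L}\psi=\lambda\psi$ ($\lambda\in\mathbb{R}$) has one of the forms (a) $e^{\mathrm{i}k_0x}p(x)$, (b) $e^{\mathrm{i}k_0x}(p_1(x)+xp_2(x))$ with $p_2\not\equiv0$, (c) $e^{\mathrm{i}k_1x}p_1(x)+e^{\mathrm{i}k_2x}p_2(x)$ with $[k_1]_\gamma\ne[k_2]_\gamma$, where $k_j\in\mathbb{C}$ and $p,p_1,p_2\in C^2_{p,\gamma}(\mathbb{R})$; the exponents $k$ are called quasimomenta, and $\mathcal{A}(\lambda)$ is the set of congruence classes modulo $2\pi/\gamma$ of quasimomenta of solutions for $\lambda$. $\sigma_{g}^{1}(\mathscr{L})$, $\sigma_{g}^{2}(\mathscr{L})$, $\sigma_{g}^{3}(\mathscr{L})$ are the sets of $\lambda\in\mathbb{R}$ for which there is a solution of form (a) with $|\mathcal{A}(\lambda)|=1$, of form (b) with $|\mathcal{A}(\lambda)|=1$, and of form (c) with $|\mathcal{A}(\lambda)|=2$, respectively. *)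

theory Defs
  imports "HOL-Analysis.Analysis"
begin

definition locfin :: "real set \<Rightarrow> bool" where
  "locfin D \<longleftrightarrow> (\<forall>a b. finite (D \<inter> {a..b}))"

definition periodic_fun :: "real \<Rightarrow> (real \<Rightarrow> 'a) \<Rightarrow> bool" where
  "periodic_fun \<gamma> f \<longleftrightarrow> (\<forall>x. f (x + \<gamma>) = f x)"

text \<open>The classes C_p^l(R): C_p^0 = piecewise continuous (finitely many discontinuities on
  each bounded interval), with |f| integrable on every bounded interval (improper integrals
  at discontinuities converge); C_p^(l+1) = continuous functions differentiable off a locally
  finite set, whose derivative lies in C_p^l.\<close>
fun Cp :: "nat \<Rightarrow> (real \<Rightarrow> complex) \<Rightarrow> bool" where
  "Cp 0 f \<longleftrightarrow> (\<exists>D. locfin D \<and> (\<forall>x. x \<notin> D \<longrightarrow> isCont f x)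
              \<and> (\<forall>a b. f absolutely_integrable_on {a..b}))"
| "Cp (Suc l) (f::real \<Rightarrow> complex) \<longleftrightarrow> continuous_on UNIV f \<and>
     (\<exists>(g::real \<Rightarrow> complex) D. locfin D \<and> Cp l g \<and> (\<forall>x::real. x \<notin> D \<longrightarrow> (f has_vector_derivative g x) (at x)))"

definition is_solution ::
  "(real \<Rightarrow> complex) \<Rightarrow> (real \<Rightarrow> complex) \<Rightarrow> real \<Rightarrow> (real \<Rightarrow> complex) \<Rightarrow> bool" where
  "is_solution V W lam \<psi> \<longleftrightarrow> Cp 2 \<psi> \<and>
     (\<exists>D. locfin D \<and> (\<forall>x. x \<notin> D \<longrightarrow>
        - vector_derivative (\<lambda>y. vector_derivative \<psi> (at y)) (at x)
          + W x * vector_derivative \<psi> (at x) + V x * \<psi> x = complex_of_real lam * \<psi> x))"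

definition qclass :: "real \<Rightarrow> complex \<Rightarrow> complex set" where
  "qclass \<gamma> k = {k + of_int m * 2 * of_real pi / of_real \<gamma> | m. True}"

definition Cp_per :: "real \<Rightarrow> (real \<Rightarrow> complex) \<Rightarrow> bool" where
  "Cp_per \<gamma> p \<longleftrightarrow> Cp 2 p \<and> periodic_fun \<gamma> p"

definition form_a :: "real \<Rightarrow> complex \<Rightarrow> (real \<Rightarrow> complex) \<Rightarrow> bool" where
  "form_a \<gamma> k \<psi> \<longleftrightarrow> (\<exists>p. Cp_per \<gamma> p \<and> p \<noteq> (\<lambda>_. 0) \<and>
      (\<forall>x. \<psi> x = exp (\<i> * k * of_real x) * p x))"

definition form_b :: "real \<Rightarrow> complex \<Rightarrow> (real \<Rightarrow> complex) \<Rightarrow> bool" where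
  "form_b \<gamma> k \<psi> \<longleftrightarrow> (\<exists>p1 p2. Cp_per \<gamma> p1 \<and> Cp_per \<gamma> p2 \<and> p2 \<noteq> (\<lambda>_. 0) \<and>
      (\<forall>x. \<psi> x = exp (\<i> * k * of_real x) * (p1 x + of_real x * p2 x)))"

definition form_c :: "real \<Rightarrow> complex \<Rightarrow> complex \<Rightarrow> (real \<Rightarrow> complex) \<Rightarrow> bool" where
  "form_c \<gamma> k1 k2 \<psi> \<longleftrightarrow> qclass \<gamma> k1 \<noteq> qclass \<gamma> k2 \<and>
     (\<exists>p1 p2. Cp_per \<gamma> p1 \<and> Cp_per \<gamma> p2 \<and> p1 \<noteq> (\<lambda>_. 0) \<and> p2 \<noteq> (\<lambda>_. 0) \<and>
      (\<forall>x. \<psi> x = exp (\<i> * k1 * of_real x) * p1 x + exp (\<i> * k2 * of_real x) * p2 x))"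

definition quasimomentum ::
  "real \<Rightarrow> (real \<Rightarrow> complex) \<Rightarrow> (real \<Rightarrow> complex) \<Rightarrow> real \<Rightarrow> complex \<Rightarrow> bool" where
  "quasimomentum \<gamma> V W lam k \<longleftrightarrow> (\<exists>\<psi>. is_solution V W lam \<psi> \<and>
      (form_a \<gamma> k \<psi> \<or> form_b \<gamma> k \<psi> \<or> (\<exists>k'. form_c \<gamma> k k' \<psi> \<or> form_c \<gamma> k' k \<psi>)))"

definition Acal :: "real \<Rightarrow> (real \<Rightarrow> complex) \<Rightarrow> (real \<Rightarrow> complex) \<Rightarrow> real \<Rightarrow> complex set set" where
  "Acal \<gamma> V W lam = {qclass \<gamma> k | k. quasimomentum \<gamma> V W lam k}"

definition sigma_g1 :: "real \<Rightarrow> (real \<Rightarrow> complex) \<Rightarrow> (real \<Rightarrow> complex) \<Rightarrow> real set" where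
  "sigma_g1 \<gamma> V W = {lam. (\<exists>\<psi> k. is_solution V W lam \<psi> \<and> form_a \<gamma> k \<psi>) \<and> card (Acal \<gamma> V W lam) = 1}"

definition sigma_g2 :: "real \<Rightarrow> (real \<Rightarrow> complex) \<Rightarrow> (real \<Rightarrow> complex) \<Rightarrow> real set" where
  "sigma_g2 \<gamma> V W = {lam. (\<exists>\<psi> k. is_solution V W lam \<psi> \<and> form_b \<gamma> k \<psi>) \<and> card (Acal \<gamma> V W lam) = 1}"

definition sigma_g3 :: "real \<Rightarrow> (real \<Rightarrow> complex) \<Rightarrow> (real \<Rightarrow> complex) \<Rightarrow> real set" where
  "sigma_g3 \<gamma> V W = {lam. (\<exists>\<psi> k1 k2. is_solution V W lam \<psi> \<and> form_c \<gamma> k1 k2 \<psi>) \<and> card (Acal \<gamma> V W lam) = 2}"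

end

theory Submission
  imports Defs
begin

text \<open>Written as a first order system for \<open>(\<psi>, \<psi>')\<close>, the equation has a unique solution for
  all initial data at \<open>0\<close>: existence by Picard iteration, which only needs local integrability of
  \<open>V\<close>, and uniqueness by Gronwall's inequality. The monodromy matrix maps the data at \<open>0\<close> to the
  data at \<open>\<gamma>\<close>; by Liouville's formula its determinant is \<open>exp (\<gamma> W\<^sub>0)\<close>, where \<open>W\<^sub>0\<close> is the
  mean of \<open>W\<close>. The data of a solution of form (a) with quasimomentum \<open>k\<close> are an eigenvector for
  the Floquet multiplier \<open>\<rho> = exp (\<i> k \<gamma>)\<close>; form (c) gives eigenvectors for two distinct
  multipliers, and form (b) a Jordan chain for \<open>\<rho>\<close>. So in cases (b) and (c) the determinant is
  \<open>\<rho>\<^sup>2\<close> resp. \<open>\<rho>\<^sub>1 \<rho>\<^sub>2\<close>. In case (a), the other eigenvalue \<open>exp (\<gamma> W\<^sub>0) / \<rho>\<close> is the multiplier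
  of a second Floquet solution, so it must equal \<open>\<rho>\<close> when \<open>\<A>(\<lambda>)\<close> has one element. Taking
  logarithms of \<open>\<rho>\<^sup>2 = exp (\<gamma> W\<^sub>0)\<close> and \<open>\<rho>\<^sub>1 \<rho>\<^sub>2 = exp (\<gamma> W\<^sub>0)\<close> modulo \<open>2 \<pi> \<i>\<close> gives the classes.\<close>

section \<open>Locally finite sets and piecewise regular functions\<close>

lemma locfin_finite: "locfin D \<Longrightarrow> finite (D \<inter> {a..b})"
  by (simp add: locfin_def)

lemma locfin_empty: "locfin {}"
  by (simp add: locfin_def)

lemma locfin_Un: "locfin A \<Longrightarrow> locfin B \<Longrightarrow> locfin (A \<union> B)"
  by (simp add: locfin_def Int_Un_distrib2)

lemma locfin_translate:
  assumes "locfin D"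
  shows "locfin {x. x + c \<in> D}"
  unfolding locfin_def
proof (intro allI)
  fix a b
  have "{x. x + c \<in> D} \<inter> {a..b} \<subseteq> (\<lambda>y. y - c) ` (D \<inter> {a+c..b+c})"
    by (auto intro!: image_eqI[where x="_ + c"])
  moreover have "finite ((\<lambda>y. y - c) ` (D \<inter> {a+c..b+c}))"
    using assms by (simp add: locfin_def)
  ultimately show "finite ({x. x + c \<in> D} \<inter> {a..b})"
    by (rule finite_subset)
qed

lemma locfin_periodic_copies:
  assumes "finite S" and "\<gamma> > 0"
  shows "locfin {s + of_int n * \<gamma> | s n. s \<in> S}"
  unfolding locfin_def
proof (intro allI)
  fix a b
  obtain M where M: "\<And>s. s \<in> S \<Longrightarrow> \<bar>s\<bar> \<le> M"
    using finite_imp_bounded[OF assms(1)] by (meson bounded_real)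
  let ?N = "{\<lfloor>(a - M) / \<gamma>\<rfloor>..\<lceil>(b + M) / \<gamma>\<rceil>}"
  have "{s + of_int n * \<gamma> | s n. s \<in> S} \<inter> {a..b} \<subseteq> (\<lambda>(s, n). s + of_int n * \<gamma>) ` (S \<times> ?N)"
  proof
    fix x assume "x \<in> {s + of_int n * \<gamma> | s n. s \<in> S} \<inter> {a..b}"
    then obtain s n where s: "s \<in> S" and x: "x = s + of_int n * \<gamma>" "a \<le> x" "x \<le> b"
      by auto
    have "(a - M) / \<gamma> \<le> of_int n" "of_int n \<le> (b + M) / \<gamma>"
      using M[OF s] x assms(2) by (auto simp: field_simps)
    then have "n \<in> ?N"
      by (simp add: floor_le_iff le_ceiling_iff)
    with s x show "x \<in> (\<lambda>(s, n). s + of_int n * \<gamma>) ` (S \<times> ?N)"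
      by force
  qed
  moreover have "finite ((\<lambda>(s, n). s + of_int n * \<gamma>) ` (S \<times> ?N))"
    using assms(1) by simp
  ultimately show "finite ({s + of_int n * \<gamma> | s n. s \<in> S} \<inter> {a..b})"
    by (rule finite_subset)
qed

lemma has_vector_derivative_translate:
  fixes f :: "real \<Rightarrow> 'a::real_normed_vector"
  assumes "(f has_vector_derivative f') (at (x + c))"
  shows "((\<lambda>y. f (y + c)) has_vector_derivative f') (at x)"
proof -
  have "((\<lambda>y. y + c) has_vector_derivative 1) (at x)"
    by (auto intro!: derivative_eq_intros)
  from vector_diff_chain_at[OF this assms] show ?thesis
    by (simp add: o_def)
qed

lemma has_vector_derivative_cexp:
  assumes "(f has_vector_derivative f') (at x)"
  shows "((\<lambda>x. exp (f x :: complex)) has_vector_derivative f' * exp (f x)) (at x)"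
  using field_vector_diff_chain_at[OF assms DERIV_exp] by (simp add: o_def)

text \<open>By the fundamental theorem of calculus, \<open>f\<close> is \<open>f a\<close> plus the indefinite integral
  of the continuous function \<open>g\<close>.\<close>
lemma has_vector_derivative_fill_finite:
  fixes f g :: "real \<Rightarrow> 'a::banach"
  assumes f: "continuous_on {a..b} f" and g: "continuous_on {a..b} g" and S: "finite S"
    and f': "\<And>x. x \<in> {a<..<b} - S \<Longrightarrow> (f has_vector_derivative g x) (at x)"
    and x: "x \<in> {a<..<b}"
  shows "(f has_vector_derivative g x) (at x)"
proof -
  have f_eq: "f y = f a + integral {a..y} g" if y: "y \<in> {a..b}" for y
  proof -
    have "(g has_integral (f y - f a)) {a..y}"
    proof (rule fundamental_theorem_of_calculus_interior_strong[OF S])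
      show "a \<le> y" using y by simp
      show "(f has_vector_derivative g t) (at t)" if "t \<in> {a<..<y} - S" for t
        using f' that y by auto
      show "continuous_on {a..y} f" using f y by (auto intro: continuous_on_subset)
    qed
    then show ?thesis by (simp add: integral_unique)
  qed
  have "((\<lambda>u. f a + integral {a..u} g) has_vector_derivative g x) (at x within {a..b})"
    using integral_has_vector_derivative[OF g, of x] x
    by (auto intro!: derivative_eq_intros)
  then have "((\<lambda>u. f a + integral {a..u} g) has_vector_derivative g x) (at x within {a<..<b})"
    by (rule has_vector_derivative_within_subset) auto
  then have "((\<lambda>u. f a + integral {a..u} g) has_vector_derivative g x) (at x)"
    using x by (metis has_vector_derivative_within_open open_greaterThanLessThan)
  then show ?thesis
  proof (rule has_vector_derivative_transform_within_open[where S="{a<..<b}"])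
    show "f a + integral {a..y} g = f y" if "y \<in> {a<..<b}" for y
      using f_eq[of y] that by simp
  qed (use x in auto)
qed

lemma has_vector_derivative_fill_locfin:
  fixes f g :: "real \<Rightarrow> 'a::banach"
  assumes "continuous_on UNIV f" and "continuous_on UNIV g" and "locfin D"
    and "\<And>x. x \<notin> D \<Longrightarrow> (f has_vector_derivative g x) (at x)"
  shows "(f has_vector_derivative g x) (at x)"
proof (rule has_vector_derivative_fill_finite[where a="x - 1" and b="x + 1" and S="D \<inter> {x-1..x+1}"])
  show "continuous_on {x - 1..x + 1} f" "continuous_on {x - 1..x + 1} g"
    using assms(1,2) by (auto intro: continuous_on_subset)
  show "finite (D \<inter> {x - 1..x + 1})"
    using assms(3) by (rule locfin_finite)
qed (use assms(4) in auto)

lemma integral_has_vector_derivative_at: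
  fixes f :: "real \<Rightarrow> 'a::banach"
  assumes "f integrable_on {a..b}" and y: "y \<in> {a<..<b}" and "isCont f y"
  shows "((\<lambda>u. integral {a..u} f) has_vector_derivative f y) (at y)"
proof -
  have "((\<lambda>u. integral {a..u} f) has_vector_derivative f y) (at y within {a..b} - {})"
    by (rule integral_has_vector_derivative_continuous_at)
       (use assms in \<open>auto intro: continuous_at_imp_continuous_within\<close>)
  then have "((\<lambda>u. integral {a..u} f) has_vector_derivative f y) (at y within {a<..<b})"
    by (rule has_vector_derivative_within_subset) auto
  with y show ?thesis
    by (metis has_vector_derivative_within_open open_greaterThanLessThan)
qed

lemma absolutely_integrable_continuous_mult:
  fixes f g :: "real \<Rightarrow> 'a::{euclidean_space,real_normed_algebra}"
  assumes f: "f absolutely_integrable_on {a..b}" and g: "continuous_on {a..b} g"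
  shows "(\<lambda>x. g x * f x) absolutely_integrable_on {a..b}"
proof (rule absolutely_integrable_bounded_measurable_product[OF bilinear_times _ _ _ f])
  show "g \<in> borel_measurable (lebesgue_on {a..b})"
    using g by (rule continuous_imp_measurable_on_sets_lebesgue) simp
  show "bounded (g ` {a..b})"
    using g by (simp add: compact_continuous_image compact_imp_bounded)
qed simp

lemma Cp0_continuous:
  assumes "continuous_on UNIV f"
  shows "Cp 0 f"
proof -
  have "isCont f x" for x
    using assms by (simp add: continuous_on_eq_continuous_at)
  moreover have "f absolutely_integrable_on {a..b}" for a b
    by (rule absolutely_integrable_continuous_real) (rule continuous_on_subset[OF assms], simp)
  ultimately show ?thesis
    using locfin_empty by auto
qed

lemma Cp0_add:
  assumes "Cp 0 f" and "Cp 0 g"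
  shows "Cp 0 (\<lambda>x. f x + g x)"
proof -
  from assms obtain D1 D2 where D: "locfin D1" "locfin D2"
    "\<forall>x. x \<notin> D1 \<longrightarrow> isCont f x" "\<forall>x. x \<notin> D2 \<longrightarrow> isCont g x"
    "\<forall>a b. f absolutely_integrable_on {a..b}" "\<forall>a b. g absolutely_integrable_on {a..b}"
    by auto
  have "(\<lambda>x. f x + g x) absolutely_integrable_on {a..b}" for a b
    using D(5,6) by (blast intro: set_integral_add(1))
  moreover have "isCont (\<lambda>x. f x + g x) x" if "x \<notin> D1 \<union> D2" for x
    using D(3,4) that by (intro continuous_intros) auto
  ultimately show ?thesis
    using locfin_Un[OF D(1,2)] by (simp only: Cp.simps) blast
qed

lemma Cp0_continuous_mult:
  assumes g: "continuous_on UNIV g" and "Cp 0 f"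
  shows "Cp 0 (\<lambda>x. g x * f x)"
proof -
  from assms obtain D where D: "locfin D"
    "\<forall>x. x \<notin> D \<longrightarrow> isCont f x" "\<forall>a b. f absolutely_integrable_on {a..b}"
    by auto
  have "(\<lambda>x. g x * f x) absolutely_integrable_on {a..b}" for a b
    using D(3) by (intro absolutely_integrable_continuous_mult continuous_on_subset[OF g]) auto
  moreover have "isCont (\<lambda>x. g x * f x) x" if "x \<notin> D" for x
    using D(2) g that by (intro continuous_intros) (auto simp: continuous_on_eq_continuous_at)
  ultimately show ?thesis
    using D(1) by (simp only: Cp.simps) blast
qed

text \<open>The function \<open>exp (- \<integral>\<^sub>0\<^sup>y m) * \<integral>\<^sub>0\<^sup>y m n\<close> vanishes at \<open>0\<close> and is non-increasing.\<close>
lemma gronwall_zero: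
  fixes n m :: "real \<Rightarrow> real"
  assumes n: "continuous_on {0..L} n" "\<And>x. x \<in> {0..L} \<Longrightarrow> 0 \<le> n x"
    and m: "m integrable_on {0..L}" "\<And>x. x \<in> {0..L} \<Longrightarrow> 0 \<le> m x"
    and S: "finite S" and m_cont: "\<And>x. x \<in> {0<..<L} - S \<Longrightarrow> isCont m x"
    and mn: "(\<lambda>s. m s * n s) integrable_on {0..L}"
    and le: "\<And>x. x \<in> {0..L} \<Longrightarrow> n x \<le> integral {0..x} (\<lambda>s. m s * n s)"
    and x: "x \<in> {0..L}"
  shows "n x = 0"
proof -
  define M where "M y = integral {0..y} m" for y
  define F where "F y = integral {0..y} (\<lambda>s. m s * n s)" for y
  define H where "H y = exp (- M y) * F y" for y
  have H_cont: "continuous_on {0..L} H"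
    unfolding H_def M_def F_def
    by (intro continuous_intros indefinite_integral_continuous_1 m(1) mn)
  have H_deriv: "(H has_vector_derivative (exp (- M y) * m y * (n y - F y))) (at y)"
    if y: "y \<in> {0<..<L} - S" for y
  proof -
    have "isCont n y"
      using y by (intro continuous_on_interior[OF n(1)]) auto
    then have "(F has_real_derivative m y * n y) (at y)"
      unfolding F_def has_real_derivative_iff_has_vector_derivative
      using y m_cont[OF y] by (intro integral_has_vector_derivative_at[OF mn]) auto
    moreover have "(M has_real_derivative m y) (at y)"
      unfolding M_def has_real_derivative_iff_has_vector_derivative
      using y m_cont[OF y] by (intro integral_has_vector_derivative_at[OF m(1)]) auto
    ultimately have "(H has_real_derivative exp (- M y) * (- m y) * F y + exp (- M y) * (m y * n y)) (at y)"
      unfolding H_def by (auto intro!: derivative_eq_intros)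
    then show ?thesis
      by (simp add: has_real_derivative_iff_has_vector_derivative algebra_simps)
  qed
  have "((\<lambda>y. exp (- M y) * m y * (n y - F y)) has_integral (H x - H 0)) {0..x}"
    by (rule fundamental_theorem_of_calculus_interior_strong[OF S])
       (use x H_deriv in \<open>auto intro: continuous_on_subset[OF H_cont]\<close>)
  moreover have "exp (- M y) * m y * (n y - F y) \<le> 0" if "y \<in> {0..x}" for y
    using that x le[of y] m(2)[of y] unfolding F_def by (auto intro: mult_nonneg_nonpos)
  ultimately have "H x - H 0 \<le> 0"
    using has_integral_le[of _ _ "{0..x}" "\<lambda>_. 0" 0] by force
  moreover have "H 0 = 0"
    by (simp add: H_def F_def)
  ultimately have "F x \<le> 0"
    by (simp add: H_def mult_le_0_iff)
  then show "n x = 0"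
    using le[OF x] n(2)[OF x] unfolding F_def by linarith
qed

lemma integral_sums_dominated:
  fixes f :: "nat \<Rightarrow> real \<Rightarrow> complex"
  assumes f: "\<And>n. f n integrable_on S" and h: "h integrable_on S"
    and sums: "\<And>s. s \<in> S \<Longrightarrow> (\<lambda>n. f n s) sums g s"
    and dominated: "\<And>N s. s \<in> S \<Longrightarrow> norm (\<Sum>n<N. f n s) \<le> h s"
  shows "g integrable_on S" and "(\<lambda>n. integral S (f n)) sums integral S g"
proof -
  have partial_sums: "(\<lambda>s. \<Sum>n<N. f n s) integrable_on S" for N
    using f by (intro integrable_sum) auto
  have "(\<lambda>N. \<Sum>n<N. f n s) \<longlonglongrightarrow> g s" if "s \<in> S" for s
    using sums[OF that] by (simp add: sums_def)
  note dc = dominated_convergence[OF partial_sums h dominated this]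
  show "g integrable_on S"
    by (rule dc(1))
  have "integral S (\<lambda>s. \<Sum>n<N. f n s) = (\<Sum>n<N. integral S (f n))" for N
    using f by (intro integral_sum) auto
  with dc(2) show "(\<lambda>n. integral S (f n)) sums integral S g"
    by (simp add: sums_def)
qed

lemma sums_integral_recursion:
  fixes f :: "nat \<Rightarrow> real \<Rightarrow> complex" and a :: "nat \<Rightarrow> complex"
  assumes "\<And>n. f n integrable_on S" and "h integrable_on S"
    and "\<And>s. s \<in> S \<Longrightarrow> (\<lambda>n. f n s) sums g s" and "\<And>N s. s \<in> S \<Longrightarrow> norm (\<Sum>n<N. f n s) \<le> h s"
    and "a sums A" and "\<And>n. a (Suc n) = integral S (f n)"
  shows "g integrable_on S \<and> A = a 0 + integral S g"
proof -
  note series = integral_sums_dominated[OF assms(1-4)]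
  have "(\<lambda>n. a (Suc n)) sums (A - a 0)"
    using assms(5) by (subst sums_Suc_iff) simp
  with series assms(6) show ?thesis
    using sums_unique2 by fastforce
qed

lemma summable_comparison_partial_sum_le:
  fixes f :: "nat \<Rightarrow> 'a::banach"
  assumes K: "summable K" and f: "\<And>n. norm (f n) \<le> K n"
  shows "summable f" and "norm (\<Sum>n<N. f n) \<le> suminf K"
proof -
  show "summable f"
    using f by (intro summable_comparison_test'[OF K]) auto
  have "norm (\<Sum>n<N. f n) \<le> (\<Sum>n<N. norm (f n))"
    by (rule norm_sum)
  also have "\<dots> \<le> (\<Sum>n<N. K n)"
    by (intro sum_mono f)
  also have "\<dots> \<le> suminf K"
    using K f by (intro sum_le_suminf) (auto intro: order_trans[OF norm_ge_zero])
  finally show "norm (\<Sum>n<N. f n) \<le> suminf K" .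
qed

section \<open>Eigenvalues of \<open>2 \<times> 2\<close> matrices\<close>

lemma det2_second_eigenvector:
  fixes a b c d r r' x y :: complex
  assumes eig: "a * x + b * y = r * x" "c * x + d * y = r * y" and xy: "x \<noteq> 0 \<or> y \<noteq> 0"
    and det: "a * d - b * c = r * r'" and r: "r \<noteq> 0"
  shows "\<exists>x' y'. (x' \<noteq> 0 \<or> y' \<noteq> 0) \<and> a * x' + b * y' = r' * x' \<and> c * x' + d * y' = r' * y'"
proof -
  have "((a - r) * (d - r) - b * c) * x = 0" "((a - r) * (d - r) - b * c) * y = 0"
    using eig by algebra+
  with xy have char_r: "(a - r) * (d - r) = b * c"
    by auto
  have "r * (a + d) = r * (r + r')"
    using char_r det by algebra
  with r have "a + d = r + r'"
    by simp
  then have char_r': "(a - r') * (d - r') = b * c"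
    using det by algebra
  have "b = 0 \<Longrightarrow> c = 0 \<Longrightarrow> a = r' \<or> d = r'"
    using char_r' by simp
  then consider "b \<noteq> 0" | "b = 0" "c \<noteq> 0" | "b = 0" "c = 0" "a = r'" | "b = 0" "c = 0" "d = r'"
    by blast
  then show ?thesis
  proof cases
    case 1
    show ?thesis
      by (rule exI[of _ b], rule exI[of _ "r' - a"]) (use 1 char_r' in algebra)
  next
    case 2
    show ?thesis
      by (rule exI[of _ "r' - d"], rule exI[of _ c]) (use 2 char_r' in algebra)
  qed (auto intro: exI[of _ 1] exI[of _ 0])
qed

lemma det2_defective_eigenvalue:
  fixes a b c d r x y x' y' :: complex
  assumes eig: "a * x + b * y = r * x" "c * x + d * y = r * y" and xy: "x \<noteq> 0 \<or> y \<noteq> 0"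
    and chain: "a * x' + b * y' = r * x' + x" "c * x' + d * y' = r * y' + y"
  shows "a * d - b * c = r * r"
proof -
  have key: "(a * d - b * c) * (x * y' - y * x') = r * r * (x * y' - y * x')"
    using eig chain by algebra
  have "x * y' - y * x' \<noteq> 0"
  proof
    assume "x * y' - y * x' = 0"
    then have "x * x = 0" "y * y = 0"
      using eig chain by algebra+
    with xy show False
      by simp
  qed
  with key show ?thesis
    by simp
qed

lemma det2_distinct_eigenvalues:
  fixes a b c d r1 r2 x1 y1 x2 y2 :: complex
  assumes eig1: "a * x1 + b * y1 = r1 * x1" "c * x1 + d * y1 = r1 * y1" and xy1: "x1 \<noteq> 0 \<or> y1 \<noteq> 0"
    and eig2: "a * x2 + b * y2 = r2 * x2" "c * x2 + d * y2 = r2 * y2" and xy2: "x2 \<noteq> 0 \<or> y2 \<noteq> 0"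
    and r: "r1 \<noteq> r2"
  shows "a * d - b * c = r1 * r2"
proof -
  have key: "(a * d - b * c) * (x1 * y2 - y1 * x2) = r1 * r2 * (x1 * y2 - y1 * x2)"
    using eig1 eig2 by algebra
  have "x1 * y2 - y1 * x2 \<noteq> 0"
  proof
    assume "x1 * y2 - y1 * x2 = 0"
    then have "(r1 - r2) * (x1 * x2) = 0" "(r1 - r2) * (x1 * y2) = 0"
      "(r1 - r2) * (y1 * x2) = 0" "(r1 - r2) * (y1 * y2) = 0"
      using eig1 eig2 by algebra+
    with xy1 xy2 r show False
      by auto
  qed
  with key show ?thesis
    by simp
qed

section \<open>Quasimomentum classes and Floquet extensions\<close>

lemma qclass_eq_iff:
  "qclass \<gamma> a = qclass \<gamma> b \<longleftrightarrow> (\<exists>n::int. a = b + of_int n * 2 * of_real pi / of_real \<gamma>)"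
proof
  assume "qclass \<gamma> a = qclass \<gamma> b"
  moreover have "a \<in> qclass \<gamma> a"
    unfolding qclass_def by (auto intro: exI[of _ 0])
  ultimately show "\<exists>n::int. a = b + of_int n * 2 * of_real pi / of_real \<gamma>"
    unfolding qclass_def by auto
next
  assume "\<exists>n::int. a = b + of_int n * 2 * of_real pi / of_real \<gamma>"
  then obtain n :: int where a: "a = b + of_int n * 2 * of_real pi / of_real \<gamma>" ..
  have shift: "z = a + of_int m * 2 * of_real pi / of_real \<gamma> \<longleftrightarrow>
        z = b + of_int (m + n) * 2 * of_real pi / of_real \<gamma>" for z and m :: int
    unfolding a by (simp add: distrib_right add_divide_distrib algebra_simps)
  have "(\<exists>m::int. z = a + of_int m * 2 * of_real pi / of_real \<gamma>) \<longleftrightarrow>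
        (\<exists>m::int. z = b + of_int m * 2 * of_real pi / of_real \<gamma>)" for z
  proof
    assume "\<exists>m::int. z = a + of_int m * 2 * of_real pi / of_real \<gamma>"
    then show "\<exists>m::int. z = b + of_int m * 2 * of_real pi / of_real \<gamma>"
      using shift by blast
  next
    assume "\<exists>m::int. z = b + of_int m * 2 * of_real pi / of_real \<gamma>"
    then obtain m :: int where "z = b + of_int m * 2 * of_real pi / of_real \<gamma>" ..
    then have "z = a + of_int (m - n) * 2 * of_real pi / of_real \<gamma>"
      using shift[of z "m - n"] by simp
    then show "\<exists>m::int. z = a + of_int m * 2 * of_real pi / of_real \<gamma>" ..
  qed
  then show "qclass \<gamma> a = qclass \<gamma> b"
    unfolding qclass_def by blast
qed

lemma qclass_eq_iff_exp:
  assumes "\<gamma> > 0"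
  shows "qclass \<gamma> a = qclass \<gamma> b \<longleftrightarrow> exp (\<i> * a * of_real \<gamma>) = exp (\<i> * b * of_real \<gamma>)"
proof -
  have "\<i> * a * of_real \<gamma> = \<i> * b * of_real \<gamma> + of_int (2 * n) * pi * \<i> \<longleftrightarrow>
        a = b + of_int n * 2 * of_real pi / of_real \<gamma>" for n :: int
  proof -
    have "\<i> * b * of_real \<gamma> + of_int (2 * n) * pi * \<i> =
        (\<i> * of_real \<gamma>) * (b + of_int n * 2 * of_real pi / of_real \<gamma>)"
      using assms by (simp add: field_simps)
    then have "\<i> * a * of_real \<gamma> = \<i> * b * of_real \<gamma> + of_int (2 * n) * pi * \<i> \<longleftrightarrow>
        (\<i> * of_real \<gamma>) * a = (\<i> * of_real \<gamma>) * (b + of_int n * 2 * of_real pi / of_real \<gamma>)"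
      by (simp add: algebra_simps)
    also have "\<dots> \<longleftrightarrow> a = b + of_int n * 2 * of_real pi / of_real \<gamma>"
      using assms by simp
    finally show ?thesis .
  qed
  then show ?thesis
    unfolding qclass_eq_iff exp_eq by auto
qed

lemma qclass_of_square_eq_exp:
  assumes "\<gamma> > 0" and "exp (\<i> * k * of_real \<gamma>) * exp (\<i> * k * of_real \<gamma>) = exp I"
  shows "qclass \<gamma> k = qclass \<gamma> (I / of_real \<gamma> / (2 * \<i>)) \<or>
         qclass \<gamma> k = qclass \<gamma> (I / of_real \<gamma> / (2 * \<i>) + of_real pi / of_real \<gamma>)"
proof -
  have "exp (\<i> * k * of_real \<gamma> + \<i> * k * of_real \<gamma>) = exp I"
    using assms(2) by (simp only: exp_add)
  then obtain n :: int where "\<i> * k * of_real \<gamma> + \<i> * k * of_real \<gamma> = I + of_int (2 * n) * pi * \<i>"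
    unfolding exp_eq by blast
  then have k: "k = I / of_real \<gamma> / (2 * \<i>) + of_int n * of_real pi / of_real \<gamma>"
    using assms(1) by (auto simp: field_simps)
  consider m :: int where "n = 2 * m" | m :: int where "n = 2 * m + 1"
    by (metis oddE evenE)
  then show ?thesis
  proof cases
    case 1
    then show ?thesis
      unfolding qclass_eq_iff k by (auto intro!: disjI1 exI[of _ m])
  next
    case 2
    then show ?thesis
      unfolding qclass_eq_iff k by (auto intro!: disjI2 exI[of _ m] simp: add_divide_distrib algebra_simps)
  qed
qed

lemma quasiperiodic_shift_int:
  fixes f :: "real \<Rightarrow> complex"
  assumes f: "\<And>x. f (x + \<gamma>) = c * f x" and c: "c \<noteq> 0"
  shows "f (x + of_int n * \<gamma>) = c powi n * f x"
proof -
  have nat: "f (y + of_nat k * \<gamma>) = c ^ k * f y" for y k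
    by (induction k) (auto simp: algebra_simps f[of "y + of_nat _ * \<gamma>", simplified algebra_simps])
  show ?thesis
  proof (cases "n \<ge> 0")
    case True
    then show ?thesis
      using nat[of x "nat n"] by (simp add: power_int_def)
  next
    case False
    then have "f x = c ^ nat (- n) * f (x + of_int n * \<gamma>)"
      using nat[of "x + of_int n * \<gamma>" "nat (- n)"] by simp
    with False c show ?thesis
      by (simp add: power_int_def field_simps)
  qed
qed

lemma periodic_fun_shift_int:
  fixes f :: "real \<Rightarrow> complex"
  assumes "periodic_fun \<gamma> f"
  shows "f (x + of_int n * \<gamma>) = f x"
  using quasiperiodic_shift_int[of f \<gamma> 1] assms by (simp add: periodic_fun_def)

lemma floor_divide_unique:
  fixes \<gamma> x :: real
  assumes "\<gamma> > 0" and "of_int n * \<gamma> \<le> x" and "x < (of_int n + 1) * \<gamma>"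
  shows "\<lfloor>x / \<gamma>\<rfloor> = n"
  using assms by (intro floor_unique) (auto simp: field_simps)

lemma floor_divide_bounds:
  fixes \<gamma> x :: real
  assumes "\<gamma> > 0"
  shows "of_int \<lfloor>x / \<gamma>\<rfloor> * \<gamma> \<le> x" and "x < (of_int \<lfloor>x / \<gamma>\<rfloor> + 1) * \<gamma>"
proof -
  have "of_int \<lfloor>x / \<gamma>\<rfloor> \<le> x / \<gamma>"
    by (rule of_int_floor_le)
  then show "of_int \<lfloor>x / \<gamma>\<rfloor> * \<gamma> \<le> x"
    using assms by (simp add: le_divide_eq)
  have "x / \<gamma> < of_int \<lfloor>x / \<gamma>\<rfloor> + 1"
    by (rule real_of_int_floor_add_one_gt)
  then show "x < (of_int \<lfloor>x / \<gamma>\<rfloor> + 1) * \<gamma>"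
    using pos_divide_less_eq[OF assms] by blast
qed

lemma quasiperiodic_eq_0:
  fixes f :: "real \<Rightarrow> complex"
  assumes f: "\<And>x. f (x + \<gamma>) = c * f x" and c: "c \<noteq> 0" and \<gamma>: "\<gamma> > 0"
    and zero: "\<And>x. x \<in> {0..\<gamma>} \<Longrightarrow> f x = 0"
  shows "f x = 0"
proof -
  define t where "t = x - of_int \<lfloor>x / \<gamma>\<rfloor> * \<gamma>"
  have "t \<in> {0..\<gamma>}"
    using floor_divide_bounds[OF \<gamma>, of x] by (auto simp: t_def algebra_simps)
  moreover have "f x = c powi \<lfloor>x / \<gamma>\<rfloor> * f t"
    using quasiperiodic_shift_int[of f \<gamma> c t "\<lfloor>x / \<gamma>\<rfloor>", OF f c] by (simp add: t_def)
  ultimately show ?thesis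
    using zero by simp
qed

definition floquet_extension :: "real \<Rightarrow> complex \<Rightarrow> (real \<Rightarrow> complex) \<Rightarrow> real \<Rightarrow> complex" where
  "floquet_extension \<gamma> c u x = c powi \<lfloor>x / \<gamma>\<rfloor> * u (x - of_int \<lfloor>x / \<gamma>\<rfloor> * \<gamma>)"

lemma floquet_extension_0: "\<gamma> > 0 \<Longrightarrow> floquet_extension \<gamma> c u 0 = u 0"
  by (simp add: floquet_extension_def)

lemma floquet_extension_shift:
  assumes "\<gamma> > 0" and "c \<noteq> 0"
  shows "floquet_extension \<gamma> c u (x + \<gamma>) = c * floquet_extension \<gamma> c u x"
proof -
  have "\<lfloor>(x + \<gamma>) / \<gamma>\<rfloor> = \<lfloor>x / \<gamma>\<rfloor> + 1"
    using assms(1) by (simp add: add_divide_distrib)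
  then show ?thesis
    using assms by (simp add: floquet_extension_def power_int_add algebra_simps)
qed

lemma floquet_extension_on_period:
  assumes \<gamma>: "\<gamma> > 0" and c: "c \<noteq> 0" and u: "u \<gamma> = c * u 0"
    and x: "x \<in> {of_int n * \<gamma>..(of_int n + 1) * \<gamma>}"
  shows "floquet_extension \<gamma> c u x = c powi n * u (x - of_int n * \<gamma>)"
proof (cases "x < (of_int n + 1) * \<gamma>")
  case True
  with x have "\<lfloor>x / \<gamma>\<rfloor> = n"
    by (intro floor_divide_unique[OF \<gamma>]) auto
  then show ?thesis
    by (simp add: floquet_extension_def)
next
  case False
  with x have x: "x = (of_int n + 1) * \<gamma>"
    by auto
  then have "\<lfloor>x / \<gamma>\<rfloor> = n + 1"
    using \<gamma> by simp
  with x c u show ?thesis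
    by (simp add: floquet_extension_def power_int_add algebra_simps)
qed

lemma floquet_extension_continuous:
  assumes \<gamma>: "\<gamma> > 0" and c: "c \<noteq> 0" and u: "u \<gamma> = c * u 0"
    and u_cont: "continuous_on {0..\<gamma>} u"
  shows "continuous_on UNIV (floquet_extension \<gamma> c u)"
proof -
  have period: "continuous_on {of_int n * \<gamma>..(of_int n + 1) * \<gamma>} (floquet_extension \<gamma> c u)" for n
  proof -
    have "(\<lambda>x. x - of_int n * \<gamma>) ` {of_int n * \<gamma>..(of_int n + 1) * \<gamma>} \<subseteq> {0..\<gamma>}"
      by (auto simp: algebra_simps)
    then have "continuous_on {of_int n * \<gamma>..(of_int n + 1) * \<gamma>} (\<lambda>x. c powi n * u (x - of_int n * \<gamma>))"
      by (intro continuous_intros continuous_on_compose2[OF u_cont])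
    then show ?thesis
      by (rule continuous_on_eq) (use floquet_extension_on_period[OF \<gamma> c u] in auto)
  qed
  have "isCont (floquet_extension \<gamma> c u) x" for x
  proof -
    define n where "n = \<lfloor>x / \<gamma>\<rfloor>"
    have "continuous_on ({of_int (n - 1) * \<gamma>..(of_int (n - 1) + 1) * \<gamma>} \<union> {of_int n * \<gamma>..(of_int n + 1) * \<gamma>})
            (floquet_extension \<gamma> c u)"
      by (intro continuous_on_closed_Un period) auto
    moreover have "{of_int (n - 1) * \<gamma>..(of_int (n - 1) + 1) * \<gamma>} \<union> {of_int n * \<gamma>..(of_int n + 1) * \<gamma>}
        = {(of_int n - 1) * \<gamma>..(of_int n + 1) * \<gamma>}"
      using \<gamma> by (auto simp: algebra_simps)
    moreover have "x \<in> interior {(of_int n - 1) * \<gamma>..(of_int n + 1) * \<gamma>}"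
      using floor_divide_bounds[OF \<gamma>, of x] \<gamma> by (auto simp: n_def algebra_simps)
    ultimately show ?thesis
      by (metis continuous_on_interior)
  qed
  then show ?thesis
    by (simp add: continuous_at_imp_continuous_on)
qed

lemma floquet_extension_has_vector_derivative:
  assumes \<gamma>: "\<gamma> > 0" and t: "t \<in> {0<..<\<gamma>}" and u': "(u has_vector_derivative u') (at t)"
  shows "(floquet_extension \<gamma> c u has_vector_derivative c powi n * u') (at (t + of_int n * \<gamma>))"
proof -
  let ?I = "{of_int n * \<gamma><..<(of_int n + 1) * \<gamma>}"
  have "((\<lambda>x. u (x - of_int n * \<gamma>)) has_vector_derivative u') (at (t + of_int n * \<gamma>))"
    using has_vector_derivative_translate[of u u' "t + of_int n * \<gamma>" "- of_int n * \<gamma>"] u' by simp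
  then have "((\<lambda>x. c powi n * u (x - of_int n * \<gamma>)) has_vector_derivative c powi n * u')
      (at (t + of_int n * \<gamma>))"
    by (auto intro!: derivative_eq_intros)
  then show ?thesis
  proof (rule has_vector_derivative_transform_within_open[where S="?I"])
    show "c powi n * u (x - of_int n * \<gamma>) = floquet_extension \<gamma> c u x" if "x \<in> ?I" for x
    proof -
      have "\<lfloor>x / \<gamma>\<rfloor> = n"
        using that by (intro floor_divide_unique[OF \<gamma>]) auto
      then show ?thesis
        by (simp add: floquet_extension_def)
    qed
  qed (use t in \<open>auto simp: algebra_simps\<close>)
qed

lemma quasiperiodic_derivative:
  fixes f g :: "real \<Rightarrow> complex"
  assumes f': "\<And>x. (f has_vector_derivative g x) (at x)" and f: "\<And>x. f (x + \<gamma>) = c * f x"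
  shows "g (x + \<gamma>) = c * g x"
proof -
  have "((\<lambda>y. f (y + \<gamma>)) has_vector_derivative g (x + \<gamma>)) (at x)"
    by (rule has_vector_derivative_translate[OF f'])
  moreover have "((\<lambda>y. f (y + \<gamma>)) has_vector_derivative c * g x) (at x)"
    using f'[of x] by (auto simp: f intro!: derivative_eq_intros)
  ultimately show ?thesis
    by (rule vector_derivative_unique_at)
qed

lemma Cp2I:
  assumes "continuous_on UNIV f" and "continuous_on UNIV g" and "\<And>x. (f has_vector_derivative g x) (at x)"
    and "locfin E" and "Cp 0 h" and "\<And>x. x \<notin> E \<Longrightarrow> (g has_vector_derivative h x) (at x)"
  shows "Cp 2 f"
  using assms locfin_empty unfolding numeral_2_eq_2 Cp.simps(2) by blast

lemma Cp2E:
  assumes "Cp 2 f"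
  obtains g h E where "\<And>x. (f has_vector_derivative g x) (at x)" and "continuous_on UNIV g"
    and "locfin E" and "Cp 0 h" and "\<And>x. x \<notin> E \<Longrightarrow> (g has_vector_derivative h x) (at x)"
proof -
  obtain g h D E where f: "continuous_on UNIV f" and "locfin D"
    and f': "\<And>x. x \<notin> D \<Longrightarrow> (f has_vector_derivative g x) (at x)"
    and g: "continuous_on UNIV g" and "locfin E" and "Cp 0 h"
    and "\<And>x. x \<notin> E \<Longrightarrow> (g has_vector_derivative h x) (at x)"
    using assms unfolding numeral_2_eq_2 Cp.simps(2) by blast
  moreover have "(f has_vector_derivative g x) (at x)" for x
    using has_vector_derivative_fill_locfin[OF f g \<open>locfin D\<close> f'] .
  ultimately show thesis
    using that by blast
qed

lemma form_a_floquet: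
  assumes "form_a \<gamma> k \<psi>"
  shows "\<psi> (x + \<gamma>) = exp (\<i> * k * of_real \<gamma>) * \<psi> x" and "\<psi> \<noteq> (\<lambda>_. 0)"
proof -
  obtain p where per: "periodic_fun \<gamma> p" and p: "p \<noteq> (\<lambda>_. 0)"
    and \<psi>: "\<And>x. \<psi> x = exp (\<i> * k * of_real x) * p x"
    using assms unfolding form_a_def Cp_per_def by blast
  show "\<psi> (x + \<gamma>) = exp (\<i> * k * of_real \<gamma>) * \<psi> x"
    using per by (simp add: \<psi> periodic_fun_def distrib_left exp_add)
  show "\<psi> \<noteq> (\<lambda>_. 0)"
    using p by (auto simp: \<psi> fun_eq_iff)
qed

section \<open>Linear second order equations\<close>

text \<open>The equation \<open>u'' = p u' + q u\<close> as a first order system for \<open>(u, v) = (u, u')\<close>;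
  Hill's equation is the case \<open>p = W\<close>, \<open>q = V - \<lambda>\<close>.\<close>
locale linear_ode =
  fixes p q :: "real \<Rightarrow> complex" and D :: "real set"
  assumes p_continuous: "continuous_on UNIV p"
    and locfin_D: "locfin D"
    and q_isCont: "\<And>x. x \<notin> D \<Longrightarrow> isCont q x"
    and q_integrable: "\<And>a b. q absolutely_integrable_on {a..b}"
begin

lemma q_Cp0: "Cp 0 q"
  using locfin_D q_isCont q_integrable by auto

lemma p_isCont: "isCont p x"
  using p_continuous by (simp add: continuous_on_eq_continuous_at)

definition ode_solution :: "(real \<Rightarrow> complex) \<Rightarrow> (real \<Rightarrow> complex) \<Rightarrow> bool" where
  "ode_solution u v \<longleftrightarrow> (\<forall>x. (u has_vector_derivative v x) (at x)) \<and> continuous_on UNIV v \<and>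
     (\<exists>E. locfin E \<and> (\<forall>x. x \<notin> E \<longrightarrow> (v has_vector_derivative p x * v x + q x * u x) (at x)))"

definition ode_solution_on :: "real \<Rightarrow> (real \<Rightarrow> complex) \<Rightarrow> (real \<Rightarrow> complex) \<Rightarrow> bool" where
  "ode_solution_on L u v \<longleftrightarrow> continuous_on {0..L} u \<and> continuous_on {0..L} v \<and>
     (\<exists>S. finite S \<and> (\<forall>x \<in> {0<..<L} - S. (u has_vector_derivative v x) (at x) \<and>
        (v has_vector_derivative p x * v x + q x * u x) (at x)))"

lemma ode_solution_continuous: "ode_solution u v \<Longrightarrow> continuous_on UNIV u"
  unfolding ode_solution_def
  by (meson continuous_at_imp_continuous_on has_vector_derivative_continuous)

lemma ode_solution_imp_on:
  assumes "ode_solution u v"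
  shows "ode_solution_on L u v"
proof -
  obtain E where "\<And>x. (u has_vector_derivative v x) (at x)" and "continuous_on UNIV v"
    and "locfin E" and "\<And>x. x \<notin> E \<Longrightarrow> (v has_vector_derivative p x * v x + q x * u x) (at x)"
    using assms unfolding ode_solution_def by blast
  moreover have "continuous_on UNIV u"
    using assms by (rule ode_solution_continuous)
  ultimately show ?thesis
    unfolding ode_solution_on_def
    by (intro conjI exI[of _ "E \<inter> {0..L}"]) (auto intro: continuous_on_subset locfin_finite)
qed

lemma ode_solution_lincomb:
  assumes "ode_solution u1 v1" and "ode_solution u2 v2"
  shows "ode_solution (\<lambda>x. a * u1 x + b * u2 x) (\<lambda>x. a * v1 x + b * v2 x)"
proof -
  obtain E1 where u1': "\<And>x. (u1 has_vector_derivative v1 x) (at x)" and "continuous_on UNIV v1"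
    and E1: "locfin E1" and v1': "\<And>x. x \<notin> E1 \<Longrightarrow> (v1 has_vector_derivative p x * v1 x + q x * u1 x) (at x)"
    using assms(1) unfolding ode_solution_def by blast
  obtain E2 where u2': "\<And>x. (u2 has_vector_derivative v2 x) (at x)" and "continuous_on UNIV v2"
    and E2: "locfin E2" and v2': "\<And>x. x \<notin> E2 \<Longrightarrow> (v2 has_vector_derivative p x * v2 x + q x * u2 x) (at x)"
    using assms(2) unfolding ode_solution_def by blast
  have "((\<lambda>x. a * u1 x + b * u2 x) has_vector_derivative a * v1 x + b * v2 x) (at x)" for x
    using u1'[of x] u2'[of x] by (auto intro!: derivative_eq_intros)
  moreover have "continuous_on UNIV (\<lambda>x. a * v1 x + b * v2 x)"
    by (intro continuous_intros) fact+
  moreover have "((\<lambda>x. a * v1 x + b * v2 x) has_vector_derivative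
      p x * (a * v1 x + b * v2 x) + q x * (a * u1 x + b * u2 x)) (at x)" if "x \<notin> E1 \<union> E2" for x
    using v1'[of x] v2'[of x] that
    by (auto intro!: derivative_eq_intros simp: algebra_simps)
  ultimately show ?thesis
    unfolding ode_solution_def using locfin_Un[OF E1 E2] by blast
qed

lemma ode_solution_on_lincomb:
  assumes "ode_solution_on L u1 v1" and "ode_solution_on L u2 v2"
  shows "ode_solution_on L (\<lambda>x. a * u1 x + b * u2 x) (\<lambda>x. a * v1 x + b * v2 x)"
proof -
  obtain S1 where "continuous_on {0..L} u1" "continuous_on {0..L} v1" "finite S1"
    and u1': "\<And>x. x \<in> {0<..<L} - S1 \<Longrightarrow> (u1 has_vector_derivative v1 x) (at x)"
    and v1': "\<And>x. x \<in> {0<..<L} - S1 \<Longrightarrow> (v1 has_vector_derivative p x * v1 x + q x * u1 x) (at x)"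
    using assms(1) unfolding ode_solution_on_def by blast
  moreover obtain S2 where "continuous_on {0..L} u2" "continuous_on {0..L} v2" "finite S2"
    and u2': "\<And>x. x \<in> {0<..<L} - S2 \<Longrightarrow> (u2 has_vector_derivative v2 x) (at x)"
    and v2': "\<And>x. x \<in> {0<..<L} - S2 \<Longrightarrow> (v2 has_vector_derivative p x * v2 x + q x * u2 x) (at x)"
    using assms(2) unfolding ode_solution_on_def by blast
  moreover have "((\<lambda>x. a * u1 x + b * u2 x) has_vector_derivative a * v1 x + b * v2 x) (at x) \<and>
      ((\<lambda>x. a * v1 x + b * v2 x) has_vector_derivative
        p x * (a * v1 x + b * v2 x) + q x * (a * u1 x + b * u2 x)) (at x)"
    if "x \<in> {0<..<L} - (S1 \<union> S2)" for x
    using u1'[of x] v1'[of x] u2'[of x] v2'[of x] that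
    by (auto intro!: derivative_eq_intros simp: algebra_simps)
  ultimately show ?thesis
    unfolding ode_solution_on_def by (intro conjI exI[of _ "S1 \<union> S2"] continuous_intros) auto
qed

lemma system_rhs_absolutely_integrable:
  assumes "continuous_on {a..b} u" and "continuous_on {a..b} v"
  shows "(\<lambda>s. p s * v s + q s * u s) absolutely_integrable_on {a..b}"
proof (rule set_integral_add(1))
  show "(\<lambda>s. p s * v s) absolutely_integrable_on {a..b}"
    by (intro absolutely_integrable_continuous_real continuous_intros assms(2)
        continuous_on_subset[OF p_continuous]) simp
  show "(\<lambda>s. q s * u s) absolutely_integrable_on {a..b}"
    using absolutely_integrable_continuous_mult[OF q_integrable assms(1)] by (simp add: mult.commute)
qed

lemma system_rhs_integrable:
  "continuous_on {a..b} u \<Longrightarrow> continuous_on {a..b} v \<Longrightarrow> (\<lambda>s. p s * v s + q s * u s) integrable_on {a..b}"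
  using system_rhs_absolutely_integrable by (simp add: absolutely_integrable_on_def)

lemma ode_solution_on_has_integral:
  assumes "ode_solution_on L u v" and x: "x \<in> {0..L}"
  shows "(v has_integral (u x - u 0)) {0..x}"
    and "((\<lambda>s. p s * v s + q s * u s) has_integral (v x - v 0)) {0..x}"
proof -
  obtain S where "continuous_on {0..L} u" "continuous_on {0..L} v" and S: "finite S"
    and "\<And>y. y \<in> {0<..<L} - S \<Longrightarrow> (u has_vector_derivative v y) (at y)"
    and "\<And>y. y \<in> {0<..<L} - S \<Longrightarrow> (v has_vector_derivative p y * v y + q y * u y) (at y)"
    using assms(1) unfolding ode_solution_on_def by blast
  moreover have "{0..x} \<subseteq> {0..L}" "{0<..<x} - S \<subseteq> {0<..<L} - S"
    using x by auto
  ultimately show "(v has_integral (u x - u 0)) {0..x}"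
    and "((\<lambda>s. p s * v s + q s * u s) has_integral (v x - v 0)) {0..x}"
    using x by (auto intro!: fundamental_theorem_of_calculus_interior_strong[OF S]
        intro: continuous_on_subset)
qed

definition weight :: "real \<Rightarrow> real" where
  "weight s = 1 + norm (p s) + norm (q s)"

lemma weight_nonneg: "0 \<le> weight s"
  by (simp add: weight_def)

lemma weight_isCont: "x \<notin> D \<Longrightarrow> isCont weight x"
  unfolding weight_def using q_isCont p_isCont by (intro continuous_intros) auto

lemma weight_absolutely_integrable: "weight absolutely_integrable_on {a..b}"
proof -
  have "(\<lambda>s. 1 + norm (p s)) absolutely_integrable_on {a..b}"
    by (intro absolutely_integrable_continuous_real continuous_intros
        continuous_on_subset[OF p_continuous]) simp
  moreover have "(\<lambda>s. norm (q s)) absolutely_integrable_on {a..b}"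
    using absolutely_integrable_norm[OF q_integrable] by (simp add: o_def)
  ultimately show ?thesis
    unfolding weight_def by (rule set_integral_add(1))
qed

lemma weight_integrable: "weight integrable_on {a..b}"
  using weight_absolutely_integrable by (simp add: absolutely_integrable_on_def)

lemma weight_mult_integrable:
  assumes "continuous_on {a..b} n"
  shows "(\<lambda>s. weight s * n s) integrable_on {a..b}"
  using absolutely_integrable_continuous_mult[OF weight_absolutely_integrable assms]
  by (simp add: absolutely_integrable_on_def mult.commute)

lemma norm_system_rhs_le:
  assumes "norm v \<le> c" and "norm u \<le> c"
  shows "norm (p s * v + q s * u) \<le> weight s * c"
proof -
  have "norm (p s * v + q s * u) \<le> norm (p s) * norm v + norm (q s) * norm u"
    by (metis norm_mult norm_triangle_ineq)
  also have "\<dots> \<le> norm (p s) * c + norm (q s) * c"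
    using assms by (intro add_mono mult_left_mono) auto
  also have "\<dots> \<le> weight s * c"
  proof -
    have "0 \<le> c"
      using assms(1) norm_ge_zero[of v] by linarith
    then show ?thesis
      by (simp add: weight_def algebra_simps)
  qed
  finally show ?thesis .
qed

lemma norm_integrals_system_le:
  assumes u: "continuous_on {0..y} u" and v: "continuous_on {0..y} v"
  shows "norm (integral {0..y} v) + norm (integral {0..y} (\<lambda>s. p s * v s + q s * u s))
     \<le> integral {0..y} (\<lambda>s. weight s * (norm (u s) + norm (v s)))"
proof -
  have v_abs: "v absolutely_integrable_on {0..y}"
    by (rule absolutely_integrable_continuous_real[OF v])
  note rhs_abs = system_rhs_absolutely_integrable[OF u v]
  have "norm (integral {0..y} v) + norm (integral {0..y} (\<lambda>s. p s * v s + q s * u s))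
      \<le> integral {0..y} (\<lambda>s. norm (v s)) + integral {0..y} (\<lambda>s. norm (p s * v s + q s * u s))"
    using v_abs rhs_abs
    by (intro add_mono integral_norm_bound_integral) (auto simp: absolutely_integrable_on_def)
  also have "\<dots> = integral {0..y} (\<lambda>s. norm (v s) + norm (p s * v s + q s * u s))"
    using v_abs rhs_abs by (intro integral_add[symmetric]) (auto simp: absolutely_integrable_on_def)
  also have "\<dots> \<le> integral {0..y} (\<lambda>s. weight s * (norm (u s) + norm (v s)))"
  proof (rule integral_le)
    show "(\<lambda>s. norm (v s) + norm (p s * v s + q s * u s)) integrable_on {0..y}"
      using v_abs rhs_abs
      by (intro Henstock_Kurzweil_Integration.integrable_add) (auto simp: absolutely_integrable_on_def)
    show "(\<lambda>s. weight s * (norm (u s) + norm (v s))) integrable_on {0..y}"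
      by (intro weight_mult_integrable continuous_intros u v)
    show "norm (v s) + norm (p s * v s + q s * u s) \<le> weight s * (norm (u s) + norm (v s))" for s
    proof -
      have "norm (p s * v s + q s * u s) \<le> norm (p s) * norm (v s) + norm (q s) * norm (u s)"
        by (metis norm_mult norm_triangle_ineq)
      moreover have "weight s * (norm (u s) + norm (v s)) = norm (v s) + norm (p s) * norm (v s)
          + norm (q s) * norm (u s) + (norm (u s) + norm (p s) * norm (u s) + norm (q s) * norm (v s))"
        by (simp add: weight_def algebra_simps)
      moreover have "0 \<le> norm (u s) + norm (p s) * norm (u s) + norm (q s) * norm (v s)"
        by simp
      ultimately show ?thesis
        by linarith
    qed
  qed
  finally show ?thesis .
qed

lemma ode_solution_on_unique:
  assumes sol: "ode_solution_on L u v" and u0: "u 0 = 0" and v0: "v 0 = 0" and x: "x \<in> {0..L}"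
  shows "u x = 0 \<and> v x = 0"
proof -
  obtain S where u: "continuous_on {0..L} u" and v: "continuous_on {0..L} v"
    using sol unfolding ode_solution_on_def by blast
  define n where "n s = norm (u s) + norm (v s)" for s
  have n_cont: "continuous_on {0..L} n"
    unfolding n_def by (intro continuous_intros u v)
  have "n y \<le> integral {0..y} (\<lambda>s. weight s * n s)" if y: "y \<in> {0..L}" for y
  proof -
    have "u y = integral {0..y} v" "v y = integral {0..y} (\<lambda>s. p s * v s + q s * u s)"
      using ode_solution_on_has_integral[OF sol y] u0 v0 by (simp_all add: integral_unique)
    moreover have "continuous_on {0..y} u" "continuous_on {0..y} v"
      using y u v by (auto intro: continuous_on_subset)
    ultimately show ?thesis
      unfolding n_def using norm_integrals_system_le[of y u v] by simp
  qed
  then have "n x = 0"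
    using x n_cont weight_integrable weight_nonneg locfin_finite[OF locfin_D] weight_isCont
      weight_mult_integrable[OF n_cont]
    by (intro gronwall_zero[where S="D \<inter> {0..L}"]) (auto simp: n_def)
  then show ?thesis
    by (simp add: n_def add_nonneg_eq_0_iff)
qed

lemma ode_solution_on_wronskian:
  assumes sol1: "ode_solution_on L u1 v1" and sol2: "ode_solution_on L u2 v2" and L: "0 \<le> L"
  shows "u1 L * v2 L - v1 L * u2 L = (u1 0 * v2 0 - v1 0 * u2 0) * exp (integral {0..L} p)"
proof -
  obtain S1 where c1: "continuous_on {0..L} u1" "continuous_on {0..L} v1" and S1: "finite S1"
    and d1: "\<And>y. y \<in> {0<..<L} - S1 \<Longrightarrow> (u1 has_vector_derivative v1 y) (at y)"
      "\<And>y. y \<in> {0<..<L} - S1 \<Longrightarrow> (v1 has_vector_derivative p y * v1 y + q y * u1 y) (at y)"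
    using sol1 unfolding ode_solution_on_def by blast
  obtain S2 where c2: "continuous_on {0..L} u2" "continuous_on {0..L} v2" and S2: "finite S2"
    and d2: "\<And>y. y \<in> {0<..<L} - S2 \<Longrightarrow> (u2 has_vector_derivative v2 y) (at y)"
      "\<And>y. y \<in> {0<..<L} - S2 \<Longrightarrow> (v2 has_vector_derivative p y * v2 y + q y * u2 y) (at y)"
    using sol2 unfolding ode_solution_on_def by blast
  define P where "P y = integral {0..y} p" for y
  define w where "w y = u1 y * v2 y - v1 y * u2 y" for y
  define H where "H y = exp (- P y) * w y" for y
  have p_int: "p integrable_on {0..L}"
    by (intro integrable_continuous_real continuous_on_subset[OF p_continuous]) simp
  have "continuous_on {0..L} H"
    unfolding H_def w_def P_def
    by (intro continuous_intros c1 c2 indefinite_integral_continuous_1 p_int)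
  moreover have "(H has_vector_derivative 0) (at y)" if y: "y \<in> {0<..<L} - (S1 \<union> S2)" for y
  proof -
    have "(P has_vector_derivative p y) (at y)"
      unfolding P_def using y p_isCont by (intro integral_has_vector_derivative_at[OF p_int]) auto
    then have "((\<lambda>y. exp (- P y)) has_vector_derivative - p y * exp (- P y)) (at y)"
      by (intro has_vector_derivative_cexp derivative_intros)
    then have "(H has_vector_derivative exp (- P y) *
        (u1 y * (p y * v2 y + q y * u2 y) + v1 y * v2 y - (v1 y * v2 y + (p y * v1 y + q y * u1 y) * u2 y))
        + - p y * exp (- P y) * w y) (at y)"
      unfolding H_def w_def using y d1[of y] d2[of y]
      by (auto intro!: derivative_eq_intros)
    then show ?thesis
      by (simp add: w_def algebra_simps)
  qed
  ultimately have "((\<lambda>y. 0) has_integral (H L - H 0)) {0..L}"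
    using S1 S2 L by (intro fundamental_theorem_of_calculus_interior_strong[of "S1 \<union> S2"]) auto
  then have "H L = H 0"
    using has_integral_unique[OF _ has_integral_0] by fastforce
  then have "w L = w 0 * exp (P L)"
    by (simp add: H_def P_def exp_minus field_simps)
  then show ?thesis
    by (simp add: w_def P_def)
qed

definition cumulative_weight :: "real \<Rightarrow> real" where
  "cumulative_weight x = integral {0..x} weight"

lemma cumulative_weight_continuous: "continuous_on {0..L} cumulative_weight"
  unfolding cumulative_weight_def by (rule indefinite_integral_continuous_1[OF weight_integrable])

lemma cumulative_weight_nonneg: "0 \<le> cumulative_weight x"
  unfolding cumulative_weight_def by (rule integral_nonneg[OF weight_integrable weight_nonneg])

lemma cumulative_weight_mono: "0 \<le> x \<Longrightarrow> x \<le> L \<Longrightarrow> cumulative_weight x \<le> cumulative_weight L"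
  unfolding cumulative_weight_def by (rule integral_subset_le) (auto intro: weight_integrable weight_nonneg)

lemma cumulative_weight_power_has_integral:
  assumes "0 \<le> x"
  shows "((\<lambda>s. weight s * (cumulative_weight s ^ n / fact n)) has_integral
    cumulative_weight x ^ Suc n / fact (Suc n)) {0..x}"
proof -
  have "((\<lambda>s. cumulative_weight s ^ Suc n / fact (Suc n)) has_vector_derivative
      weight s * (cumulative_weight s ^ n / fact n)) (at s)"
    if s: "s \<in> {0<..<x} - D \<inter> {0..x}" for s
  proof -
    have cw': "(cumulative_weight has_real_derivative weight s) (at s)"
      unfolding cumulative_weight_def has_real_derivative_iff_has_vector_derivative
      using s weight_isCont by (intro integral_has_vector_derivative_at[OF weight_integrable]) auto
    then have "((\<lambda>s. cumulative_weight s ^ Suc n / fact (Suc n)) has_real_derivative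
        of_nat (Suc n) * (weight s * cumulative_weight s ^ n) / fact (Suc n)) (at s)"
      using DERIV_power[where n="Suc n", OF cw'] by (intro DERIV_cdivide) simp
    moreover have "of_nat (Suc n) * (weight s * cumulative_weight s ^ n) / fact (Suc n)
        = weight s * (cumulative_weight s ^ n / fact n)"
      by (simp add: fact_Suc field_simps del: of_nat_Suc)
    ultimately show ?thesis
      by (simp add: has_real_derivative_iff_has_vector_derivative)
  qed
  then have "((\<lambda>s. weight s * (cumulative_weight s ^ n / fact n)) has_integral
      cumulative_weight x ^ Suc n / fact (Suc n) - cumulative_weight 0 ^ Suc n / fact (Suc n)) {0..x}"
    using assms locfin_finite[OF locfin_D]
    by (intro fundamental_theorem_of_calculus_interior_strong[of "D \<inter> {0..x}"])
       (auto intro!: continuous_intros cumulative_weight_continuous)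
  then show ?thesis
    by (simp add: cumulative_weight_def)
qed

text \<open>The iterates are the terms of the Picard series, not its partial sums: the initial
  values enter only the zeroth term.\<close>
primrec picard_iterate :: "complex \<Rightarrow> complex \<Rightarrow> nat \<Rightarrow> (real \<Rightarrow> complex) \<times> (real \<Rightarrow> complex)" where
  "picard_iterate a b 0 = ((\<lambda>_. a), (\<lambda>_. b))"
| "picard_iterate a b (Suc n) =
     ((\<lambda>x. integral {0..x} (snd (picard_iterate a b n))),
      (\<lambda>x. integral {0..x} (\<lambda>s. p s * snd (picard_iterate a b n) s + q s * fst (picard_iterate a b n) s)))"

lemma norm_integrals_system_le_power:
  assumes u: "continuous_on {0..x} u" and v: "continuous_on {0..x} v" and x: "0 \<le> x"
    and bound: "\<And>s. s \<in> {0..x} \<Longrightarrow> norm (u s) + norm (v s) \<le> B * (cumulative_weight s ^ n / fact n)"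
  shows "norm (integral {0..x} v) + norm (integral {0..x} (\<lambda>s. p s * v s + q s * u s))
    \<le> B * (cumulative_weight x ^ Suc n / fact (Suc n))"
proof -
  have "norm (integral {0..x} v) + norm (integral {0..x} (\<lambda>s. p s * v s + q s * u s))
      \<le> integral {0..x} (\<lambda>s. weight s * (norm (u s) + norm (v s)))"
    by (rule norm_integrals_system_le[OF u v])
  also have "\<dots> \<le> integral {0..x} (\<lambda>s. B * (weight s * (cumulative_weight s ^ n / fact n)))"
  proof (rule integral_le)
    show "(\<lambda>s. weight s * (norm (u s) + norm (v s))) integrable_on {0..x}"
      by (intro weight_mult_integrable continuous_intros u v)
    show "(\<lambda>s. B * (weight s * (cumulative_weight s ^ n / fact n))) integrable_on {0..x}"
      by (intro integrable_on_mult_right has_integral_integrable[OF cumulative_weight_power_has_integral[OF x]])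
    show "weight s * (norm (u s) + norm (v s)) \<le> B * (weight s * (cumulative_weight s ^ n / fact n))"
      if "s \<in> {0..x}" for s
      using mult_left_mono[OF bound[OF that] weight_nonneg[of s]] by (simp add: mult.left_commute)
  qed
  also have "\<dots> = B * (cumulative_weight x ^ Suc n / fact (Suc n))"
    by (intro integral_unique has_integral_mult_right cumulative_weight_power_has_integral x)
  finally show ?thesis .
qed

lemma picard_iterate_bound:
  "continuous_on {0..L} (fst (picard_iterate a b n)) \<and> continuous_on {0..L} (snd (picard_iterate a b n)) \<and>
   (\<forall>x\<in>{0..L}. norm (fst (picard_iterate a b n) x) + norm (snd (picard_iterate a b n) x)
      \<le> (norm a + norm b) * (cumulative_weight x ^ n / fact n))"
proof (induction n)
  case 0
  show ?case
    by simp
next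
  case (Suc n)
  define u where "u = fst (picard_iterate a b n)"
  define v where "v = snd (picard_iterate a b n)"
  have u: "continuous_on {0..L} u" and v: "continuous_on {0..L} v"
    and bound: "\<And>x. x \<in> {0..L} \<Longrightarrow> norm (u x) + norm (v x) \<le> (norm a + norm b) * (cumulative_weight x ^ n / fact n)"
    using Suc unfolding u_def v_def by blast+
  have "continuous_on {0..L} (\<lambda>x. integral {0..x} v)"
    by (rule indefinite_integral_continuous_1[OF integrable_continuous_real[OF v]])
  moreover have "continuous_on {0..L} (\<lambda>x. integral {0..x} (\<lambda>s. p s * v s + q s * u s))"
    by (rule indefinite_integral_continuous_1[OF system_rhs_integrable[OF u v]])
  moreover have "norm (integral {0..x} v) + norm (integral {0..x} (\<lambda>s. p s * v s + q s * u s))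
      \<le> (norm a + norm b) * (cumulative_weight x ^ Suc n / fact (Suc n))" if x: "x \<in> {0..L}" for x
    using x bound by (intro norm_integrals_system_le_power continuous_on_subset[OF u] continuous_on_subset[OF v])
      auto
  ultimately show ?case
    by (simp add: u_def v_def)
qed

lemma ode_solution_on_of_integral_equations:
  assumes v_int: "v integrable_on {0..L}" and rhs_int: "(\<lambda>s. p s * v s + q s * u s) integrable_on {0..L}"
    and u_eq: "\<And>x. x \<in> {0..L} \<Longrightarrow> u x = a + integral {0..x} v"
    and v_eq: "\<And>x. x \<in> {0..L} \<Longrightarrow> v x = b + integral {0..x} (\<lambda>s. p s * v s + q s * u s)"
  shows "ode_solution_on L u v"
proof -
  have "continuous_on {0..L} (\<lambda>x. a + integral {0..x} v)"
    by (intro continuous_intros indefinite_integral_continuous_1 v_int)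
  then have u: "continuous_on {0..L} u"
    by (rule continuous_on_eq) (simp add: u_eq)
  have "continuous_on {0..L} (\<lambda>x. b + integral {0..x} (\<lambda>s. p s * v s + q s * u s))"
    by (intro continuous_intros indefinite_integral_continuous_1 rhs_int)
  then have v: "continuous_on {0..L} v"
    by (rule continuous_on_eq) (simp add: v_eq)
  have "(u has_vector_derivative v y) (at y) \<and> (v has_vector_derivative p y * v y + q y * u y) (at y)"
    if y: "y \<in> {0<..<L} - D" for y
  proof -
    have "isCont u y" "isCont v y"
      using y by (auto intro!: continuous_on_interior[OF u] continuous_on_interior[OF v])
    then have "isCont (\<lambda>s. p s * v s + q s * u s) y"
      using y q_isCont p_isCont by (intro continuous_intros) auto
    then have "((\<lambda>x. b + integral {0..x} (\<lambda>s. p s * v s + q s * u s)) has_vector_derivative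
        p y * v y + q y * u y) (at y)"
      using y by (auto intro!: derivative_eq_intros integral_has_vector_derivative_at[OF rhs_int])
    moreover have "((\<lambda>x. a + integral {0..x} v) has_vector_derivative v y) (at y)"
      using y \<open>isCont v y\<close> by (auto intro!: derivative_eq_intros integral_has_vector_derivative_at[OF v_int])
    ultimately show ?thesis
      using y u_eq v_eq
      by (auto elim!: has_vector_derivative_transform_within_open[where S="{0<..<L}"])
  qed
  then show ?thesis
    unfolding ode_solution_on_def using u v locfin_finite[OF locfin_D, of 0 L]
    by (intro conjI exI[of _ "D \<inter> {0..L}"]) auto
qed

lemma picard_iterate_dominated:
  obtains K where "summable K"
    and "\<And>n x. x \<in> {0..L} \<Longrightarrow> norm (fst (picard_iterate a b n) x) \<le> K n \<and> norm (snd (picard_iterate a b n) x) \<le> K n"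
proof
  define K where "K n = (norm a + norm b) * (cumulative_weight L ^ n / fact n)" for n
  show "summable K"
    unfolding K_def using summable_exp_generic[of "cumulative_weight L"]
    by (intro summable_mult) (simp add: divide_inverse_commute)
  show "norm (fst (picard_iterate a b n) x) \<le> K n \<and> norm (snd (picard_iterate a b n) x) \<le> K n"
    if x: "x \<in> {0..L}" for n x
  proof -
    have "norm (fst (picard_iterate a b n) x) + norm (snd (picard_iterate a b n) x)
        \<le> (norm a + norm b) * (cumulative_weight x ^ n / fact n)"
      using picard_iterate_bound x by blast
    also have "\<dots> \<le> K n"
      unfolding K_def using x cumulative_weight_nonneg[of x] cumulative_weight_mono[of x L]
      by (intro mult_left_mono divide_right_mono power_mono) auto
    finally show ?thesis
      using norm_ge_zero[of "fst (picard_iterate a b n) x"] norm_ge_zero[of "snd (picard_iterate a b n) x"]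
      by linarith
  qed
qed

lemma ode_solution_on_exists:
  assumes L: "0 \<le> L"
  shows "\<exists>u v. ode_solution_on L u v \<and> u 0 = a \<and> v 0 = b"
proof -
  define P where "P n = fst (picard_iterate a b n)" for n
  define Q where "Q n = snd (picard_iterate a b n)" for n
  obtain K where K: "summable K" and PQ_le: "\<And>n x. x \<in> {0..L} \<Longrightarrow> norm (P n x) \<le> K n \<and> norm (Q n x) \<le> K n"
    using picard_iterate_dominated unfolding P_def Q_def by blast
  define u where "u x = (\<Sum>n. P n x)" for x
  define v where "v x = (\<Sum>n. Q n x)" for x
  have P: "(\<lambda>n. P n x) sums u x" "norm (\<Sum>n<N. P n x) \<le> suminf K"
    and Q: "(\<lambda>n. Q n x) sums v x" "norm (\<Sum>n<N. Q n x) \<le> suminf K" if "x \<in> {0..L}" for x N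
    using summable_comparison_partial_sum_le[OF K, of "\<lambda>n. P n x"]
      summable_comparison_partial_sum_le[OF K, of "\<lambda>n. Q n x"] PQ_le[OF that]
    unfolding u_def v_def by (auto intro: summable_sums)
  have P_cont: "continuous_on {0..x} (P n)" and Q_cont: "continuous_on {0..x} (Q n)" for x n
    using picard_iterate_bound[of x] by (simp_all add: P_def Q_def)
  have u_eq: "v integrable_on {0..x} \<and> u x = P 0 x + integral {0..x} v" if x: "x \<in> {0..L}" for x
  proof (rule sums_integral_recursion[where h="\<lambda>_. suminf K" and a="\<lambda>n. P n x"])
    show "Q n integrable_on {0..x}" for n
      by (rule integrable_continuous_real[OF Q_cont])
    show "(\<lambda>_. suminf K) integrable_on {0..x}"
      by (rule integrable_continuous_real[OF continuous_on_const])
    show "(\<lambda>n. Q n s) sums v s" "norm (\<Sum>n<N. Q n s) \<le> suminf K" if "s \<in> {0..x}" for N s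
      using that x Q by auto
  qed (use x P in \<open>auto simp: P_def Q_def\<close>)
  have v_eq: "(\<lambda>s. p s * v s + q s * u s) integrable_on {0..x} \<and>
      v x = Q 0 x + integral {0..x} (\<lambda>s. p s * v s + q s * u s)" if x: "x \<in> {0..L}" for x
  proof (rule sums_integral_recursion[where h="\<lambda>s. weight s * suminf K" and a="\<lambda>n. Q n x"])
    show "(\<lambda>s. p s * Q n s + q s * P n s) integrable_on {0..x}" for n
      by (intro system_rhs_integrable P_cont Q_cont)
    show "(\<lambda>s. weight s * suminf K) integrable_on {0..x}"
      by (intro integrable_on_mult_left weight_integrable)
    show "(\<lambda>n. p s * Q n s + q s * P n s) sums (p s * v s + q s * u s)" if "s \<in> {0..x}" for s
      using that x P Q by (intro sums_add sums_mult) auto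
    show "norm (\<Sum>n<N. p s * Q n s + q s * P n s) \<le> weight s * suminf K" if "s \<in> {0..x}" for N s
      using that x P Q unfolding sum.distrib sum_distrib_left[symmetric]
      by (intro norm_system_rhs_le) auto
  qed (use x Q in \<open>auto simp: P_def Q_def\<close>)
  have PQ_0: "P 0 x = a" "Q 0 x = b" for x
    by (simp_all add: P_def Q_def)
  have "ode_solution_on L u v"
    using u_eq v_eq L unfolding PQ_0 by (intro ode_solution_on_of_integral_equations[where a=a and b=b]) auto
  moreover have "u 0 = a" "v 0 = b"
    using u_eq[of 0] v_eq[of 0] L unfolding PQ_0 by auto
  ultimately show ?thesis
    by blast
qed

lemma ode_solution_Cp2_exp_mult:
  assumes sol: "ode_solution u v"
  shows "Cp 2 (\<lambda>x. exp (a * of_real x) * u x)"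
proof -
  obtain E where u': "\<And>x. (u has_vector_derivative v x) (at x)" and v: "continuous_on UNIV v"
    and E: "locfin E" and v': "\<And>x. x \<notin> E \<Longrightarrow> (v has_vector_derivative p x * v x + q x * u x) (at x)"
    using sol unfolding ode_solution_def by blast
  have u: "continuous_on UNIV u"
    using sol by (rule ode_solution_continuous)
  define e where "e x = exp (a * of_real x)" for x
  have e': "(e has_vector_derivative a * e x) (at x)" for x
    unfolding e_def by (intro has_vector_derivative_cexp) (auto intro!: derivative_eq_intros)
  have e: "continuous_on UNIV e"
    unfolding e_def by (intro continuous_intros)
  define h where "h x = e x * (a * a * u x + 2 * a * v x + p x * v x) + (e x * u x) * q x" for x
  show ?thesis
    unfolding e_def[symmetric]
  proof (rule Cp2I[where g="\<lambda>x. e x * (a * u x + v x)" and h=h])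
    show "continuous_on UNIV (\<lambda>x. e x * u x)" "continuous_on UNIV (\<lambda>x. e x * (a * u x + v x))"
      by (intro continuous_intros e u v)+
    show "((\<lambda>x. e x * u x) has_vector_derivative e x * (a * u x + v x)) (at x)" for x
      using e'[of x] u'[of x] by (auto intro!: derivative_eq_intros simp: algebra_simps)
    show "((\<lambda>x. e x * (a * u x + v x)) has_vector_derivative h x) (at x)" if "x \<notin> E" for x
      using e'[of x] u'[of x] v'[OF that]
      by (auto intro!: derivative_eq_intros simp: h_def algebra_simps)
    show "Cp 0 h"
      unfolding h_def
      by (intro Cp0_add Cp0_continuous Cp0_continuous_mult q_Cp0 continuous_intros e u v p_continuous)
  qed (rule E)
qed

end

section \<open>Periodic coefficients: monodromy and Floquet solutions\<close>

locale periodic_linear_ode = linear_ode +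
  fixes \<gamma> :: real
  assumes period_pos: "\<gamma> > 0"
    and p_periodic: "periodic_fun \<gamma> p" and q_periodic: "periodic_fun \<gamma> q"
begin

lemma ode_solution_translate:
  assumes "ode_solution u v"
  shows "ode_solution (\<lambda>x. u (x + \<gamma>)) (\<lambda>x. v (x + \<gamma>))"
proof -
  obtain E where u': "\<And>x. (u has_vector_derivative v x) (at x)" and v: "continuous_on UNIV v"
    and E: "locfin E" and v': "\<And>x. x \<notin> E \<Longrightarrow> (v has_vector_derivative p x * v x + q x * u x) (at x)"
    using assms unfolding ode_solution_def by blast
  have "((\<lambda>x. u (x + \<gamma>)) has_vector_derivative v (x + \<gamma>)) (at x)" for x
    by (rule has_vector_derivative_translate[OF u'])
  moreover have "continuous_on UNIV (\<lambda>x. v (x + \<gamma>))"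
    by (intro continuous_on_compose2[OF v] continuous_intros) auto
  moreover have "((\<lambda>x. v (x + \<gamma>)) has_vector_derivative p x * v (x + \<gamma>) + q x * u (x + \<gamma>)) (at x)"
    if "x \<notin> {x. x + \<gamma> \<in> E}" for x
    using has_vector_derivative_translate[OF v'[of "x + \<gamma>"]] that p_periodic q_periodic
    by (simp add: periodic_fun_def)
  ultimately show ?thesis
    unfolding ode_solution_def using locfin_translate[OF E] by blast
qed

text \<open>The gluing points \<open>n \<gamma>\<close> are added to the exceptional set; the derivative of the
  extension there is recovered from continuity.\<close>
lemma ode_solution_floquet_extension:
  assumes sol: "ode_solution_on \<gamma> u v" and u\<gamma>: "u \<gamma> = c * u 0" and v\<gamma>: "v \<gamma> = c * v 0"
    and c: "c \<noteq> 0"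
  shows "ode_solution (floquet_extension \<gamma> c u) (floquet_extension \<gamma> c v)"
proof -
  obtain S where u: "continuous_on {0..\<gamma>} u" and v: "continuous_on {0..\<gamma>} v" and S: "finite S"
    and u': "\<And>t. t \<in> {0<..<\<gamma>} - S \<Longrightarrow> (u has_vector_derivative v t) (at t)"
    and v': "\<And>t. t \<in> {0<..<\<gamma>} - S \<Longrightarrow> (v has_vector_derivative p t * v t + q t * u t) (at t)"
    using sol unfolding ode_solution_on_def by blast
  let ?F = "floquet_extension \<gamma> c u" and ?G = "floquet_extension \<gamma> c v"
  define E where "E = {s + of_int n * \<gamma> | s n. s \<in> insert 0 S}"
  have E: "locfin E"
    unfolding E_def using S period_pos by (intro locfin_periodic_copies) auto
  have F: "continuous_on UNIV ?F" and G: "continuous_on UNIV ?G"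
    using period_pos c u\<gamma> v\<gamma> u v by (auto intro: floquet_extension_continuous)
  have FG': "(?F has_vector_derivative ?G x) (at x) \<and> (?G has_vector_derivative p x * ?G x + q x * ?F x) (at x)"
    if x: "x \<notin> E" for x
  proof -
    define n where "n = \<lfloor>x / \<gamma>\<rfloor>"
    define t where "t = x - of_int n * \<gamma>"
    have xt: "x = t + of_int n * \<gamma>"
      by (simp add: t_def)
    have "0 \<le> t" "t < \<gamma>"
      using floor_divide_bounds[OF period_pos, of x] by (auto simp: t_def n_def algebra_simps)
    moreover have "t \<notin> insert 0 S"
      using x unfolding E_def xt by blast
    ultimately have t: "t \<in> {0<..<\<gamma>} - S"
      by auto
    have "?F x = c powi n * u t" "?G x = c powi n * v t"
      by (simp_all add: floquet_extension_def t_def n_def)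
    moreover have "p x = p t" "q x = q t"
      unfolding xt using p_periodic q_periodic by (simp_all add: periodic_fun_shift_int)
    moreover have "(?F has_vector_derivative c powi n * v t) (at x)"
      "(?G has_vector_derivative c powi n * (p t * v t + q t * u t)) (at x)"
      unfolding xt using period_pos t u'[OF t] v'[OF t]
      by (auto intro: floquet_extension_has_vector_derivative)
    ultimately show ?thesis
      by (simp add: algebra_simps)
  qed
  have "(?F has_vector_derivative ?G x) (at x)" for x
    using F G E FG' by (blast intro: has_vector_derivative_fill_locfin)
  then show ?thesis
    unfolding ode_solution_def using G E FG' by blast
qed

definition monodromy :: "complex \<Rightarrow> complex \<Rightarrow> complex \<Rightarrow> complex \<Rightarrow> bool" where
  "monodromy m11 m12 m21 m22 \<longleftrightarrow> (\<forall>u v. ode_solution_on \<gamma> u v \<longrightarrow>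
     u \<gamma> = m11 * u 0 + m12 * v 0 \<and> v \<gamma> = m21 * u 0 + m22 * v 0)"

lemma monodromy_exists:
  "\<exists>m11 m12 m21 m22. monodromy m11 m12 m21 m22 \<and> m11 * m22 - m12 * m21 = exp (integral {0..\<gamma>} p)"
proof -
  have \<gamma>: "0 \<le> \<gamma>"
    using period_pos by simp
  obtain u1 v1 where sol1: "ode_solution_on \<gamma> u1 v1" "u1 0 = 1" "v1 0 = 0"
    using ode_solution_on_exists[OF \<gamma>] by blast
  obtain u2 v2 where sol2: "ode_solution_on \<gamma> u2 v2" "u2 0 = 0" "v2 0 = 1"
    using ode_solution_on_exists[OF \<gamma>] by blast
  have "u \<gamma> = u1 \<gamma> * u 0 + u2 \<gamma> * v 0 \<and> v \<gamma> = v1 \<gamma> * u 0 + v2 \<gamma> * v 0"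
    if sol: "ode_solution_on \<gamma> u v" for u v
  proof -
    have "ode_solution_on \<gamma> (\<lambda>x. u 0 * u1 x + v 0 * u2 x) (\<lambda>x. u 0 * v1 x + v 0 * v2 x)"
      by (rule ode_solution_on_lincomb[OF sol1(1) sol2(1)])
    then have "ode_solution_on \<gamma> (\<lambda>x. 1 * u x + (- 1) * (u 0 * u1 x + v 0 * u2 x))
        (\<lambda>x. 1 * v x + (- 1) * (u 0 * v1 x + v 0 * v2 x))"
      by (rule ode_solution_on_lincomb[OF sol])
    then have "1 * u \<gamma> + (- 1) * (u 0 * u1 \<gamma> + v 0 * u2 \<gamma>) = 0 \<and>
        1 * v \<gamma> + (- 1) * (u 0 * v1 \<gamma> + v 0 * v2 \<gamma>) = 0"
      by (rule ode_solution_on_unique) (use sol1 sol2 \<gamma> in auto)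
    then show ?thesis
      by (simp add: algebra_simps)
  qed
  moreover have "u1 \<gamma> * v2 \<gamma> - u2 \<gamma> * v1 \<gamma> = exp (integral {0..\<gamma>} p)"
    using ode_solution_on_wronskian[OF sol1(1) sol2(1) \<gamma>] sol1 sol2 by (simp add: mult.commute)
  ultimately show ?thesis
    unfolding monodromy_def by blast
qed

lemma floquet_eigenvector:
  assumes "monodromy m11 m12 m21 m22" and sol: "ode_solution u v" and u: "\<And>x. u (x + \<gamma>) = c * u x"
  shows "m11 * u 0 + m12 * v 0 = c * u 0" and "m21 * u 0 + m22 * v 0 = c * v 0"
proof -
  have "v (0 + \<gamma>) = c * v 0"
    using sol u by (intro quasiperiodic_derivative[of u v]) (auto simp: ode_solution_def)
  then show "m11 * u 0 + m12 * v 0 = c * u 0" and "m21 * u 0 + m22 * v 0 = c * v 0"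
    using assms(1) ode_solution_imp_on[OF sol] u[of 0] unfolding monodromy_def by auto
qed

lemma floquet_initial_data_nonzero:
  assumes sol: "ode_solution u v" and u: "\<And>x. u (x + \<gamma>) = c * u x" and c: "c \<noteq> 0"
    and nontrivial: "u \<noteq> (\<lambda>_. 0)"
  shows "u 0 \<noteq> 0 \<or> v 0 \<noteq> 0"
proof (rule ccontr)
  assume "\<not> (u 0 \<noteq> 0 \<or> v 0 \<noteq> 0)"
  then have "u x = 0" if "x \<in> {0..\<gamma>}" for x
    using ode_solution_on_unique[OF ode_solution_imp_on[OF sol] _ _ that] by auto
  then have "u x = 0" for x
    using quasiperiodic_eq_0[of u \<gamma> c, OF u c period_pos] by blast
  with nontrivial show False
    by auto
qed

lemma floquet_solution_exists:
  assumes "monodromy m11 m12 m21 m22"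
    and "m11 * a + m12 * b = c * a" and "m21 * a + m22 * b = c * b" and "c \<noteq> 0"
  shows "\<exists>u v. ode_solution u v \<and> (\<forall>x. u (x + \<gamma>) = c * u x) \<and> u 0 = a \<and> v 0 = b"
proof -
  obtain u v where sol: "ode_solution_on \<gamma> u v" "u 0 = a" "v 0 = b"
    using ode_solution_on_exists[of \<gamma> a b] period_pos by auto
  then have "u \<gamma> = c * u 0" "v \<gamma> = c * v 0"
    using assms(1-3) unfolding monodromy_def by auto
  with sol assms(4) show ?thesis
    using ode_solution_floquet_extension floquet_extension_shift floquet_extension_0 period_pos
    by metis
qed

lemma floquet_form_a:
  assumes sol: "ode_solution u v" and u: "\<And>x. u (x + \<gamma>) = exp (\<i> * k * of_real \<gamma>) * u x"
    and nontrivial: "u \<noteq> (\<lambda>_. 0)"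
  shows "form_a \<gamma> k u"
proof -
  define p where "p x = exp (- (\<i> * k) * of_real x) * u x" for x
  have "Cp 2 p"
    unfolding p_def by (rule ode_solution_Cp2_exp_mult[OF sol])
  moreover have "periodic_fun \<gamma> p"
  proof -
    have "exp (- (\<i> * k) * of_real (x + \<gamma>)) * exp (\<i> * k * of_real \<gamma>) = exp (- (\<i> * k) * of_real x)" for x
      by (simp add: mult_exp_exp algebra_simps)
    then show ?thesis
      unfolding periodic_fun_def p_def u by (metis mult.assoc)
  qed
  moreover have u_p: "u x = exp (\<i> * k * of_real x) * p x" for x
    by (simp add: p_def exp_minus)
  moreover have "p \<noteq> (\<lambda>_. 0)"
    using nontrivial by (auto simp: fun_eq_iff u_p)
  ultimately show ?thesis
    unfolding form_a_def Cp_per_def by blast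
qed

lemma floquet_component_solution:
  assumes sol: "ode_solution \<psi> v" and \<psi>: "\<And>x. \<psi> x = e1 x + e2 x"
    and e1: "\<And>x. e1 (x + \<gamma>) = r1 * e1 x" and e2: "\<And>x. e2 (x + \<gamma>) = r2 * e2 x" and r: "r1 \<noteq> r2"
  shows "\<exists>g. ode_solution e1 g"
proof -
  have "ode_solution (\<lambda>x. (1 / (r1 - r2)) * \<psi> (x + \<gamma>) + (- r2 / (r1 - r2)) * \<psi> x)
      (\<lambda>x. (1 / (r1 - r2)) * v (x + \<gamma>) + (- r2 / (r1 - r2)) * v x)"
    by (rule ode_solution_lincomb[OF ode_solution_translate[OF sol] sol])
  moreover have "(1 / (r1 - r2)) * \<psi> (x + \<gamma>) + (- r2 / (r1 - r2)) * \<psi> x = e1 x" for x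
  proof -
    have "(1 / (r1 - r2)) * \<psi> (x + \<gamma>) + (- r2 / (r1 - r2)) * \<psi> x = (\<psi> (x + \<gamma>) - r2 * \<psi> x) / (r1 - r2)"
      by (simp add: diff_divide_distrib)
    also have "\<psi> (x + \<gamma>) - r2 * \<psi> x = (r1 - r2) * e1 x"
      unfolding \<psi> e1 e2 by (simp add: algebra_simps)
    finally show ?thesis
      using r by simp
  qed
  ultimately show ?thesis
    by auto
qed

end

section \<open>Hill's equation\<close>

locale hill_equation = periodic_linear_ode W "\<lambda>x. V x - of_real lam" D \<gamma>
  for W V :: "real \<Rightarrow> complex" and lam :: real and D :: "real set" and \<gamma> :: real
begin

lemma is_solution_iff_ode_solution: "is_solution V W lam \<psi> \<longleftrightarrow> (\<exists>v. ode_solution \<psi> v)"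
proof
  assume "is_solution V W lam \<psi>"
  then obtain D' where C2: "Cp 2 \<psi>" and D': "locfin D'" and eq: "\<And>x. x \<notin> D' \<Longrightarrow>
      - vector_derivative (\<lambda>y. vector_derivative \<psi> (at y)) (at x)
        + W x * vector_derivative \<psi> (at x) + V x * \<psi> x = complex_of_real lam * \<psi> x"
    unfolding is_solution_def by blast
  obtain v h E where \<psi>': "\<And>x. (\<psi> has_vector_derivative v x) (at x)" and v: "continuous_on UNIV v"
    and E: "locfin E" and v': "\<And>x. x \<notin> E \<Longrightarrow> (v has_vector_derivative h x) (at x)"
    by (rule Cp2E[OF C2]) blast
  have "(\<lambda>y. vector_derivative \<psi> (at y)) = v"
    using \<psi>' vector_derivative_at by blast
  then have "h x = W x * v x + (V x - of_real lam) * \<psi> x" if "x \<notin> D' \<union> E" for x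
    using eq[of x] v'[of x] that vector_derivative_at[OF v'[of x]] by (auto simp: algebra_simps)
  then have "ode_solution \<psi> v"
    unfolding ode_solution_def using \<psi>' v v' locfin_Un[OF D' E] by (metis UnCI)
  then show "\<exists>v. ode_solution \<psi> v"
    by blast
next
  assume "\<exists>v. ode_solution \<psi> v"
  then obtain v E where sol: "ode_solution \<psi> v" and \<psi>': "\<And>x. (\<psi> has_vector_derivative v x) (at x)"
    and E: "locfin E" and v': "\<And>x. x \<notin> E \<Longrightarrow> (v has_vector_derivative W x * v x + (V x - of_real lam) * \<psi> x) (at x)"
    unfolding ode_solution_def by blast
  have "Cp 2 \<psi>"
    using ode_solution_Cp2_exp_mult[OF sol, of 0] by simp
  moreover have "- vector_derivative (\<lambda>y. vector_derivative \<psi> (at y)) (at x)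
      + W x * vector_derivative \<psi> (at x) + V x * \<psi> x = of_real lam * \<psi> x" if "x \<notin> E" for x
  proof -
    have "(\<lambda>y. vector_derivative \<psi> (at y)) = v"
      using \<psi>' vector_derivative_at by blast
    moreover have "vector_derivative \<psi> (at x) = v x"
      using \<psi>' by (rule vector_derivative_at)
    moreover have "vector_derivative v (at x) = W x * v x + (V x - of_real lam) * \<psi> x"
      using v'[OF that] by (rule vector_derivative_at)
    ultimately show ?thesis
      by (simp add: algebra_simps)
  qed
  ultimately show "is_solution V W lam \<psi>"
    unfolding is_solution_def using E by blast
qed

lemma quasimomentum_of_multiplier:
  assumes mono: "monodromy m11 m12 m21 m22"
    and eig: "m11 * a + m12 * b = c * a" "m21 * a + m22 * b = c * b" and ab: "a \<noteq> 0 \<or> b \<noteq> 0"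
    and c: "c \<noteq> 0"
  shows "\<exists>k. exp (\<i> * k * of_real \<gamma>) = c \<and> quasimomentum \<gamma> V W lam k"
proof -
  obtain u v where sol: "ode_solution u v" and u: "\<And>x. u (x + \<gamma>) = c * u x"
    and data: "u 0 = a" "v 0 = b"
    using floquet_solution_exists[OF mono eig c] by blast
  have "u \<noteq> (\<lambda>_. 0)"
  proof
    assume "u = (\<lambda>_. 0)"
    then have "v 0 = 0"
      using sol vector_derivative_unique_at[of u "v 0" 0 0] unfolding ode_solution_def by auto
    with \<open>u = (\<lambda>_. 0)\<close> data ab show False
      by auto
  qed
  define k where "k = Ln c / (\<i> * of_real \<gamma>)"
  have k: "exp (\<i> * k * of_real \<gamma>) = c"
    using c period_pos by (simp add: k_def)
  then have "form_a \<gamma> k u"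
    using floquet_form_a[OF sol _ \<open>u \<noteq> (\<lambda>_. 0)\<close>] u by simp
  then have "quasimomentum \<gamma> V W lam k"
    using sol is_solution_iff_ode_solution unfolding quasimomentum_def by blast
  with k show ?thesis
    by blast
qed

lemma multiplier_square_if_unique_class:
  assumes sol: "is_solution V W lam \<psi>" and fa: "form_a \<gamma> k \<psi>" and card: "card (Acal \<gamma> V W lam) = 1"
  shows "exp (\<i> * k * of_real \<gamma>) * exp (\<i> * k * of_real \<gamma>) = exp (integral {0..\<gamma>} W)"
proof (rule ccontr)
  define \<rho> where "\<rho> = exp (\<i> * k * of_real \<gamma>)"
  define \<Delta> where "\<Delta> = exp (integral {0..\<gamma>} W)"
  have \<rho>: "\<rho> \<noteq> 0" and \<Delta>: "\<Delta> \<noteq> 0"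
    by (simp_all add: \<rho>_def \<Delta>_def)
  assume "\<not> ?thesis"
  then have other: "\<Delta> / \<rho> \<noteq> \<rho>"
    using \<rho> by (auto simp: \<rho>_def \<Delta>_def field_simps)
  obtain v where sol': "ode_solution \<psi> v"
    using sol is_solution_iff_ode_solution by blast
  obtain m11 m12 m21 m22 where mono: "monodromy m11 m12 m21 m22" and det: "m11 * m22 - m12 * m21 = \<Delta>"
    using monodromy_exists unfolding \<Delta>_def by blast
  have \<psi>: "\<And>x. \<psi> (x + \<gamma>) = \<rho> * \<psi> x" "\<psi> \<noteq> (\<lambda>_. 0)"
    using form_a_floquet[OF fa] unfolding \<rho>_def by blast+
  have "m11 * m22 - m12 * m21 = \<rho> * (\<Delta> / \<rho>)"
    using det \<rho> by simp
  then obtain a b where ab: "a \<noteq> 0 \<or> b \<noteq> 0"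
    and eig: "m11 * a + m12 * b = \<Delta> / \<rho> * a" "m21 * a + m22 * b = \<Delta> / \<rho> * b"
    using det2_second_eigenvector[OF floquet_eigenvector[OF mono sol' \<psi>(1)]
        floquet_initial_data_nonzero[OF sol' \<psi>(1) \<rho> \<psi>(2)]] \<rho>
    by blast
  moreover have "\<Delta> / \<rho> \<noteq> 0"
    using \<rho> \<Delta> by simp
  ultimately obtain k' where k': "exp (\<i> * k' * of_real \<gamma>) = \<Delta> / \<rho>" "quasimomentum \<gamma> V W lam k'"
    using quasimomentum_of_multiplier[OF mono eig ab] by blast
  have "qclass \<gamma> k' \<in> Acal \<gamma> V W lam" "qclass \<gamma> k \<in> Acal \<gamma> V W lam"
    using k'(2) sol fa unfolding Acal_def quasimomentum_def by blast+
  with card have "qclass \<gamma> k' = qclass \<gamma> k"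
    by (metis card_1_singletonE singletonD)
  with k'(1) other show False
    unfolding qclass_eq_iff_exp[OF period_pos] \<rho>_def by simp
qed

lemma multiplier_square_form_b:
  assumes sol: "is_solution V W lam \<psi>" and fb: "form_b \<gamma> k \<psi>"
  shows "exp (\<i> * k * of_real \<gamma>) * exp (\<i> * k * of_real \<gamma>) = exp (integral {0..\<gamma>} W)"
proof -
  define \<rho> where "\<rho> = exp (\<i> * k * of_real \<gamma>)"
  have \<rho>: "\<rho> \<noteq> 0"
    by (simp add: \<rho>_def)
  obtain v where sol': "ode_solution \<psi> v"
    using sol is_solution_iff_ode_solution by blast
  obtain m11 m12 m21 m22 where mono: "monodromy m11 m12 m21 m22"
    and det: "m11 * m22 - m12 * m21 = exp (integral {0..\<gamma>} W)"
    using monodromy_exists by blast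
  obtain p1 p2 where per: "periodic_fun \<gamma> p1" "periodic_fun \<gamma> p2" and p2: "p2 \<noteq> (\<lambda>_. 0)"
    and \<psi>: "\<And>x. \<psi> x = exp (\<i> * k * of_real x) * (p1 x + of_real x * p2 x)"
    using fb unfolding form_b_def Cp_per_def by blast
  define f where "f x = 1 * \<psi> (x + \<gamma>) + (- \<rho>) * \<psi> x" for x
  define g where "g x = 1 * v (x + \<gamma>) + (- \<rho>) * v x" for x
  have sol_f: "ode_solution f g"
    unfolding f_def g_def by (rule ode_solution_lincomb[OF ode_solution_translate[OF sol'] sol'])
  have per': "p1 (x + \<gamma>) = p1 x" "p2 (x + \<gamma>) = p2 x" for x
    using per unfolding periodic_fun_def by blast+
  have shift: "exp (\<i> * k * of_real (x + \<gamma>)) = \<rho> * exp (\<i> * k * of_real x)" for x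
    by (simp add: \<rho>_def distrib_left exp_add mult.commute)
  have f: "f x = \<rho> * of_real \<gamma> * exp (\<i> * k * of_real x) * p2 x" for x
    unfolding f_def \<psi> shift per' by (simp add: algebra_simps)
  have f_floquet: "f (x + \<gamma>) = \<rho> * f x" for x
    unfolding f shift per' by (simp add: ac_simps)
  have "f \<noteq> (\<lambda>_. 0)"
    using p2 \<rho> period_pos by (auto simp: f fun_eq_iff)
  then have f_data: "f 0 \<noteq> 0 \<or> g 0 \<noteq> 0"
    by (rule floquet_initial_data_nonzero[OF sol_f f_floquet \<rho>])
  have chain: "m11 * \<psi> 0 + m12 * v 0 = \<rho> * \<psi> 0 + f 0" "m21 * \<psi> 0 + m22 * v 0 = \<rho> * v 0 + g 0"
    using mono ode_solution_imp_on[OF sol'] unfolding monodromy_def f_def g_def by auto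
  have "m11 * m22 - m12 * m21 = \<rho> * \<rho>"
    by (rule det2_defective_eigenvalue[OF floquet_eigenvector[OF mono sol_f f_floquet] f_data chain])
  with det show ?thesis
    by (simp add: \<rho>_def)
qed

lemma multiplier_product_form_c:
  assumes sol: "is_solution V W lam \<psi>" and fc: "form_c \<gamma> k1 k2 \<psi>"
  shows "exp (\<i> * k1 * of_real \<gamma>) * exp (\<i> * k2 * of_real \<gamma>) = exp (integral {0..\<gamma>} W)"
proof -
  define r1 where "r1 = exp (\<i> * k1 * of_real \<gamma>)"
  define r2 where "r2 = exp (\<i> * k2 * of_real \<gamma>)"
  have r1: "r1 \<noteq> 0" and r2: "r2 \<noteq> 0"
    by (simp_all add: r1_def r2_def)
  obtain v where sol': "ode_solution \<psi> v"
    using sol is_solution_iff_ode_solution by blast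
  obtain m11 m12 m21 m22 where mono: "monodromy m11 m12 m21 m22"
    and det: "m11 * m22 - m12 * m21 = exp (integral {0..\<gamma>} W)"
    using monodromy_exists by blast
  obtain p1 p2 where r: "r1 \<noteq> r2" and per: "periodic_fun \<gamma> p1" "periodic_fun \<gamma> p2"
    and p: "p1 \<noteq> (\<lambda>_. 0)" "p2 \<noteq> (\<lambda>_. 0)"
    and \<psi>: "\<And>x. \<psi> x = exp (\<i> * k1 * of_real x) * p1 x + exp (\<i> * k2 * of_real x) * p2 x"
    using fc qclass_eq_iff_exp[OF period_pos] unfolding form_c_def Cp_per_def r1_def r2_def by blast
  define e1 where "e1 x = exp (\<i> * k1 * of_real x) * p1 x" for x
  define e2 where "e2 x = exp (\<i> * k2 * of_real x) * p2 x" for x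
  have e1: "e1 (x + \<gamma>) = r1 * e1 x" and e2: "e2 (x + \<gamma>) = r2 * e2 x" for x
    using per by (simp_all add: e1_def e2_def r1_def r2_def periodic_fun_def distrib_left exp_add)
  have e1_nz: "e1 \<noteq> (\<lambda>_. 0)" and e2_nz: "e2 \<noteq> (\<lambda>_. 0)"
    using p by (auto simp: e1_def e2_def fun_eq_iff)
  have \<psi>12: "\<psi> x = e1 x + e2 x" and \<psi>21: "\<psi> x = e2 x + e1 x" for x
    by (simp_all add: \<psi> e1_def e2_def)
  obtain g1 g2 where sol1: "ode_solution e1 g1" and sol2: "ode_solution e2 g2"
    using floquet_component_solution[OF sol' \<psi>12 e1 e2 r] floquet_component_solution[OF sol' \<psi>21 e2 e1 r[symmetric]]
    by blast
  have "m11 * m22 - m12 * m21 = r1 * r2"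
    by (rule det2_distinct_eigenvalues[OF floquet_eigenvector[OF mono sol1 e1]
          floquet_initial_data_nonzero[OF sol1 e1 r1 e1_nz] floquet_eigenvector[OF mono sol2 e2]
          floquet_initial_data_nonzero[OF sol2 e2 r2 e2_nz] r])
  with det show ?thesis
    by (simp add: r1_def r2_def)
qed

lemma Acal_if_sigma_g12:
  assumes "lam \<in> sigma_g1 \<gamma> V W \<union> sigma_g2 \<gamma> V W"
  obtains k where "Acal \<gamma> V W lam = {qclass \<gamma> k}"
    and "exp (\<i> * k * of_real \<gamma>) * exp (\<i> * k * of_real \<gamma>) = exp (integral {0..\<gamma>} W)"
proof -
  obtain \<psi> k where sol: "is_solution V W lam \<psi>" and form: "form_a \<gamma> k \<psi> \<or> form_b \<gamma> k \<psi>"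
    and card: "card (Acal \<gamma> V W lam) = 1"
    using assms unfolding sigma_g1_def sigma_g2_def by blast
  have "qclass \<gamma> k \<in> Acal \<gamma> V W lam"
    using sol form unfolding Acal_def quasimomentum_def by blast
  with card have "Acal \<gamma> V W lam = {qclass \<gamma> k}"
    by (metis card_1_singletonE singletonD)
  moreover have "exp (\<i> * k * of_real \<gamma>) * exp (\<i> * k * of_real \<gamma>) = exp (integral {0..\<gamma>} W)"
    using form multiplier_square_if_unique_class[OF sol _ card] multiplier_square_form_b[OF sol] by blast
  ultimately show thesis
    by (rule that)
qed

lemma Acal_if_sigma_g3:
  assumes "lam \<in> sigma_g3 \<gamma> V W"
  obtains k1 k2 where "Acal \<gamma> V W lam = {qclass \<gamma> k1, qclass \<gamma> k2}"
    and "exp (\<i> * k1 * of_real \<gamma>) * exp (\<i> * k2 * of_real \<gamma>) = exp (integral {0..\<gamma>} W)"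
proof -
  obtain \<psi> k1 k2 where sol: "is_solution V W lam \<psi>" and form: "form_c \<gamma> k1 k2 \<psi>"
    and card: "card (Acal \<gamma> V W lam) = 2"
    using assms unfolding sigma_g3_def by blast
  have "{qclass \<gamma> k1, qclass \<gamma> k2} \<subseteq> Acal \<gamma> V W lam"
    using sol form unfolding Acal_def quasimomentum_def by blast
  moreover have "card {qclass \<gamma> k1, qclass \<gamma> k2} = 2"
    using form unfolding form_c_def by simp
  moreover have "finite (Acal \<gamma> V W lam)"
    using card by (intro card_ge_0_finite) simp
  ultimately have "Acal \<gamma> V W lam = {qclass \<gamma> k1, qclass \<gamma> k2}"
    using card card_subset_eq by metis
  then show thesis
    using multiplier_product_form_c[OF sol form] by (rule that)
qed

end

theorem theorem3p6:
  fixes \<gamma> :: real and V W :: "real \<Rightarrow> complex" and lam :: real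
  assumes "\<gamma> > 0"
    and "Cp 0 V" and "periodic_fun \<gamma> V"
    and "continuous_on UNIV W" and "periodic_fun \<gamma> W"
  defines "Wbar \<equiv> integral {0..\<gamma>} W / complex_of_real \<gamma>"
  shows "(lam \<in> sigma_g1 \<gamma> V W \<union> sigma_g2 \<gamma> V W \<longrightarrow>
            Acal \<gamma> V W lam = {qclass \<gamma> (Wbar / (2 * \<i>))} \<or>
            Acal \<gamma> V W lam = {qclass \<gamma> (Wbar / (2 * \<i>) + of_real pi / of_real \<gamma>)})
       \<and> (lam \<in> sigma_g3 \<gamma> V W \<longrightarrow>
            (\<exists>k1 k2. Acal \<gamma> V W lam = {qclass \<gamma> k1, qclass \<gamma> k2} \<and>
                     qclass \<gamma> (k1 + k2) = qclass \<gamma> (Wbar / \<i>)))"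
proof -
  obtain D where D: "locfin D" "\<And>x. x \<notin> D \<Longrightarrow> isCont V x" "\<And>a b. V absolutely_integrable_on {a..b}"
    using assms(2) by auto
  interpret hill_equation W V lam D \<gamma>
  proof
    show "(\<lambda>x. V x - of_real lam) absolutely_integrable_on {a..b}" for a b
      by (rule set_integral_diff(1)[OF D(3)]) (rule absolutely_integrable_continuous_real, simp)
  qed (use assms D in \<open>auto simp: periodic_fun_def\<close>)
  show ?thesis
  proof (intro conjI impI)
    assume "lam \<in> sigma_g1 \<gamma> V W \<union> sigma_g2 \<gamma> V W"
    then obtain k where "Acal \<gamma> V W lam = {qclass \<gamma> k}"
      and "exp (\<i> * k * of_real \<gamma>) * exp (\<i> * k * of_real \<gamma>) = exp (integral {0..\<gamma>} W)"
      by (rule Acal_if_sigma_g12)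
    then show "Acal \<gamma> V W lam = {qclass \<gamma> (Wbar / (2 * \<i>))} \<or>
        Acal \<gamma> V W lam = {qclass \<gamma> (Wbar / (2 * \<i>) + of_real pi / of_real \<gamma>)}"
      using qclass_of_square_eq_exp[OF assms(1)] unfolding Wbar_def by auto
  next
    assume "lam \<in> sigma_g3 \<gamma> V W"
    then obtain k1 k2 where "Acal \<gamma> V W lam = {qclass \<gamma> k1, qclass \<gamma> k2}"
      and "exp (\<i> * k1 * of_real \<gamma>) * exp (\<i> * k2 * of_real \<gamma>) = exp (integral {0..\<gamma>} W)"
      by (rule Acal_if_sigma_g3)
    moreover from this(2) have "qclass \<gamma> (k1 + k2) = qclass \<gamma> (Wbar / \<i>)"
      using assms(1) by (simp add: qclass_eq_iff_exp Wbar_def distrib_left distrib_right exp_add)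
    ultimately show "\<exists>k1 k2. Acal \<gamma> V W lam = {qclass \<gamma> k1, qclass \<gamma> k2} \<and>
        qclass \<gamma> (k1 + k2) = qclass \<gamma> (Wbar / \<i>)"
      by blast
  qed
qed

end
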